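(* Let $(V_1,V_2)$ be a pair of commuting isometries on a Hilbert space $\mathcal H$ and $V=V_1V_2$. The following are equivalent: (a) $C(V_1,V_2)=0$; (b) $\ker V_2^*$ is a reducing subspace for $V_1$ and $V_1|_{\ker V_2^*}$ is a unitary; (c) $\ker V_1^*$ is a reducing subspace for $V_2$ and $V_2|_{\ker V_1^*}$ is a unitary; (d) the fringe operators $F_1$ and $F_2$ are unitaries; (e) $\ker V_1^*$ and $\ker V_2^*$ are orthogonal and their direct sum is $\ker V^*$; (f) $(\operatorname{ran}V_1\ominus\operatorname{ran}V)\oplus(\operatorname{ran}V_2\ominus\operatorname{ran}V)\oplus\operatorname{ran}V=\mathcal H$; (g) if $(\mathcal E,P,U)$ is the BCL triple for $(V_1,V_2)$, then $\operatorname{ran}P$ reduces $U$.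
   Context: Defect operator: $C(V_1,V_2)=I-V_1V_1^*-V_2V_2^*+V_1V_2V_2^*V_1^*$. Fringe operators: $F_1:\ker V_1^*\to\ker V_1^*$, $F_1x=P_{\ker V_1^*}V_2x$; $F_2:\ker V_2^*\to\ker V_2^*$, $F_2x=P_{\ker V_2^*}V_1x$. Given a Hilbert space $\mathcal E$, projection $P$ and unitary $U$ on $\mathcal E$, set $P^\perp=I-P$, $\varphi_1(z)=U^*(P^\perp+zP)$, $\varphi_2(z)=(P+zP^\perp)U$. Berger–Coburn–Lebow theorem: for commuting isometries $(V_1,V_2)$ on $\mathcal H$, $\mathcal H=\mathcal H_p\oplus\mathcal H_u$ (jointly reducing), $V_i|_{\mathcal H_u}$ commuting unitaries, and there is a triple $(\mathcal E,P,U)$, unique up to unitary equivalence, with $(V_1|_{\mathcal H_p},V_2|_{\mathcal H_p})$ unitarily equal to the multiplication operators $(M_{\varphi_1},M_{\varphi_2})$ on the Hardy space $H^2_{\mathbb D}(\mathcal E)$ ($\mathcal E\cong\ker V^*$); this is the BCL triple. *)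

theory Defs
  imports "HOL-Analysis.Analysis"
begin

text \<open>A complex inner product space is modelled as a real inner product space
  (the real inner product being the real part of the complex one) together with a
  complex scalar multiplication extending the real one, such that multiplication by
  the imaginary unit is orthogonal. Orthogonality,
  orthogonal complements, orthogonal projections and adjoints of complex-linear
  operators agree with the ones computed from the real part of the inner product.\<close>

class complex_inner = real_inner +
  fixes scaleC :: "complex \<Rightarrow> 'a \<Rightarrow> 'a"
  assumes scaleC_add_right: "scaleC a (x + y) = scaleC a x + scaleC a y"
    and scaleC_add_left: "scaleC (a + b) x = scaleC a x + scaleC b x"
    and scaleC_scaleC: "scaleC a (scaleC b x) = scaleC (a * b) x"
    and scaleC_one: "scaleC 1 x = x"
    and scaleR_scaleC: "scaleR r x = scaleC (complex_of_real r) x"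
    and inner_scaleC_ii: "inner (scaleC \<i> x) (scaleC \<i> y) = inner x y"

class chilbert_space = complex_inner + complete_space

definition cinner :: "'a::complex_inner \<Rightarrow> 'a \<Rightarrow> complex" where
  "cinner x y = Complex (inner x y) (- inner x (scaleC \<i> y))"

definition csubspace :: "'a::complex_inner set \<Rightarrow> bool" where
  "csubspace M \<longleftrightarrow> 0 \<in> M \<and> (\<forall>x\<in>M. \<forall>y\<in>M. x + y \<in> M) \<and> (\<forall>c. \<forall>x\<in>M. scaleC c x \<in> M)"

definition closed_csubspace :: "'a::complex_inner set \<Rightarrow> bool" where
  "closed_csubspace M \<longleftrightarrow> csubspace M \<and> closed M"

definition clinear_on :: "'a::complex_inner set \<Rightarrow> ('a \<Rightarrow> 'b::complex_inner) \<Rightarrow> bool" where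
  "clinear_on M T \<longleftrightarrow> (\<forall>x\<in>M. \<forall>y\<in>M. T (x + y) = T x + T y)
     \<and> (\<forall>c. \<forall>x\<in>M. T (scaleC c x) = scaleC c (T x))"

abbreviation clinear :: "('a::complex_inner \<Rightarrow> 'b::complex_inner) \<Rightarrow> bool" where
  "clinear T \<equiv> clinear_on UNIV T"

definition cisometry :: "('a::complex_inner \<Rightarrow> 'a) \<Rightarrow> bool" where
  "cisometry V \<longleftrightarrow> clinear V \<and> (\<forall>x. norm (V x) = norm x)"

definition adj_on :: "'a::complex_inner set \<Rightarrow> ('a \<Rightarrow> 'a) \<Rightarrow> 'a \<Rightarrow> 'a" where
  "adj_on E T y = (THE z. z \<in> E \<and> (\<forall>x\<in>E. inner z x = inner y (T x)))"

abbreviation adj :: "('a::complex_inner \<Rightarrow> 'a) \<Rightarrow> 'a \<Rightarrow> 'a" where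
  "adj T \<equiv> adj_on UNIV T"

definition ker_op :: "('a \<Rightarrow> 'b::zero) \<Rightarrow> 'a set" where
  "ker_op T = {x. T x = 0}"

definition ocomp :: "'a::real_inner set \<Rightarrow> 'a set" where
  "ocomp M = {x. \<forall>m\<in>M. inner x m = 0}"

definition ominus_sp :: "'a::real_inner set \<Rightarrow> 'a set \<Rightarrow> 'a set" where
  "ominus_sp A B = A \<inter> ocomp B"

definition orth_sets :: "'a::real_inner set \<Rightarrow> 'a set \<Rightarrow> bool" where
  "orth_sets A B \<longleftrightarrow> (\<forall>a\<in>A. \<forall>b\<in>B. inner a b = 0)"

definition ssum :: "'a::plus set \<Rightarrow> 'a set \<Rightarrow> 'a set" where
  "ssum A B = {a + b | a b. a \<in> A \<and> b \<in> B}"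

definition oproj :: "'a::real_inner set \<Rightarrow> 'a \<Rightarrow> 'a" where
  "oproj M x = (THE y. y \<in> M \<and> x - y \<in> ocomp M)"

definition reducing_on :: "'a::complex_inner set \<Rightarrow> 'a set \<Rightarrow> ('a \<Rightarrow> 'a) \<Rightarrow> bool" where
  "reducing_on E M T \<longleftrightarrow> (\<forall>x\<in>M. T x \<in> M) \<and> (\<forall>x\<in>M. adj_on E T x \<in> M)"

abbreviation reducing :: "'a::complex_inner set \<Rightarrow> ('a \<Rightarrow> 'a) \<Rightarrow> bool" where
  "reducing M T \<equiv> reducing_on UNIV M T"

definition unitary_on :: "'a::complex_inner set \<Rightarrow> ('a \<Rightarrow> 'a) \<Rightarrow> bool" where
  "unitary_on M T \<longleftrightarrow> clinear_on M T \<and> T ` M = M \<and> (\<forall>x\<in>M. norm (T x) = norm x)"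

definition orth_proj_on :: "'a::complex_inner set \<Rightarrow> ('a \<Rightarrow> 'a) \<Rightarrow> bool" where
  "orth_proj_on E P \<longleftrightarrow> (\<forall>x\<in>E. P x \<in> E) \<and> clinear_on E P \<and> (\<forall>x\<in>E. P (P x) = P x)
     \<and> (\<forall>x\<in>E. \<forall>y\<in>E. inner (P x) y = inner x (P y))"

definition defect_op :: "('a::complex_inner \<Rightarrow> 'a) \<Rightarrow> ('a \<Rightarrow> 'a) \<Rightarrow> 'a \<Rightarrow> 'a" where
  "defect_op V1 V2 x = x - V1 (adj V1 x) - V2 (adj V2 x) + V1 (V2 (adj V2 (adj V1 x)))"

text \<open>F1 x = P_{ker V1*} V2 x, as an operator on ker V1*.\<close>
definition fringe1 :: "('a::complex_inner \<Rightarrow> 'a) \<Rightarrow> ('a \<Rightarrow> 'a) \<Rightarrow> 'a \<Rightarrow> 'a" where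
  "fringe1 V1 V2 x = oproj (ker_op (adj V1)) (V2 x)"

text \<open>F2 x = P_{ker V2*} V1 x, as an operator on ker V2*.\<close>
definition fringe2 :: "('a::complex_inner \<Rightarrow> 'a) \<Rightarrow> ('a \<Rightarrow> 'a) \<Rightarrow> 'a \<Rightarrow> 'a" where
  "fringe2 V1 V2 x = oproj (ker_op (adj V2)) (V1 x)"

text \<open>The E-valued Hardy space H^2_D(E), represented (via Taylor coefficients,
  a unitary identification) as the space of square-summable E-valued sequences.\<close>
definition hardy2 :: "'a::real_normed_vector set \<Rightarrow> (nat \<Rightarrow> 'a) set" where
  "hardy2 E = {f. (\<forall>n. f n \<in> E) \<and> summable (\<lambda>n. (norm (f n))\<^sup>2)}"

definition l2norm :: "(nat \<Rightarrow> 'a::real_normed_vector) \<Rightarrow> real" where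
  "l2norm f = sqrt (\<Sum>n. (norm (f n))\<^sup>2)"

text \<open>Multiplication by phi1(z) = U*(P^\<perp> + z P), on Taylor coefficients.\<close>
definition M_phi1 :: "'a::complex_inner set \<Rightarrow> ('a \<Rightarrow> 'a) \<Rightarrow> ('a \<Rightarrow> 'a) \<Rightarrow> (nat \<Rightarrow> 'a) \<Rightarrow> nat \<Rightarrow> 'a" where
  "M_phi1 E P U f n = adj_on E U ((f n - P (f n)) + (case n of 0 \<Rightarrow> 0 | Suc m \<Rightarrow> P (f m)))"

text \<open>Multiplication by phi2(z) = (P + z P^\<perp>) U, on Taylor coefficients.\<close>
definition M_phi2 :: "'a::complex_inner set \<Rightarrow> ('a \<Rightarrow> 'a) \<Rightarrow> ('a \<Rightarrow> 'a) \<Rightarrow> (nat \<Rightarrow> 'a) \<Rightarrow> nat \<Rightarrow> 'a" where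
  "M_phi2 E P U f n = P (U (f n)) + (case n of 0 \<Rightarrow> 0 | Suc m \<Rightarrow> U (f m) - P (U (f m)))"

text \<open>(E, P, U) is a BCL triple for (V1, V2): E is a Hilbert space (realised as a closed
  subspace of H, which is no loss since E is isomorphic to ker V*), P an orthogonal
  projection and U a unitary on E, and there is a decomposition H = Hp \<oplus> Hu into
  jointly reducing subspaces with V1, V2 unitary on Hu and (V1|Hp, V2|Hp) unitarily
  equivalent (via W) to (M_phi1, M_phi2) on H^2_D(E).\<close>
definition is_BCL_triple :: "('a::complex_inner \<Rightarrow> 'a) \<Rightarrow> ('a \<Rightarrow> 'a) \<Rightarrow> 'a set \<Rightarrow> ('a \<Rightarrow> 'a) \<Rightarrow> ('a \<Rightarrow> 'a) \<Rightarrow> bool" where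
  "is_BCL_triple V1 V2 E P U \<longleftrightarrow>
     closed_csubspace E \<and> orth_proj_on E P \<and> unitary_on E U \<and>
     (\<exists>Hp Hu (W :: 'a \<Rightarrow> nat \<Rightarrow> 'a).
        closed_csubspace Hp \<and> closed_csubspace Hu \<and> orth_sets Hp Hu \<and> ssum Hp Hu = UNIV \<and>
        reducing Hp V1 \<and> reducing Hp V2 \<and> reducing Hu V1 \<and> reducing Hu V2 \<and>
        unitary_on Hu V1 \<and> unitary_on Hu V2 \<and>
        W ` Hp = hardy2 E \<and> inj_on W Hp \<and>
        (\<forall>x\<in>Hp. \<forall>y\<in>Hp. W (x + y) = (\<lambda>n. W x n + W y n)) \<and>
        (\<forall>c. \<forall>x\<in>Hp. W (scaleC c x) = (\<lambda>n. scaleC c (W x n))) \<and>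
        (\<forall>x\<in>Hp. l2norm (W x) = norm x) \<and>
        (\<forall>x\<in>Hp. W (V1 x) = M_phi1 E P U (W x)) \<and>
        (\<forall>x\<in>Hp. W (V2 x) = M_phi2 E P U (W x)))"

end

theory Submission
  imports Defs
begin

text \<open>Let \<open>Q1 = I - V1 V1*\<close> be the projection onto \<open>ker V1*\<close>. Since \<open>V1\<close> and \<open>V2\<close> commute,
  so do their adjoints, and the defect operator factors as \<open>C = Q1 - V2 Q1 V2*\<close>, the difference
  of the projections onto \<open>ker V1*\<close> and onto \<open>V2 (ker V1*)\<close>. Hence \<open>C = 0\<close> exactly when \<open>V2\<close>
  maps \<open>ker V1*\<close> onto itself, and conditions (b)--(f) are reformulations of this by elementary
  Hilbert space geometry, (b) following from (c) by exchanging the roles of \<open>V1\<close> and \<open>V2\<close>.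

  For (g), in any BCL model the vectors of \<open>ker V1*\<close> are the constant functions \<open>e\<close> with
  \<open>U e \<in> ran P\<close>, and \<open>V2\<close> acts on them as \<open>e \<mapsto> U e\<close>; so \<open>V2 (ker V1*) = ker V1*\<close> makes
  \<open>ran P\<close> invariant under \<open>U\<close> and \<open>U*\<close>. Conversely, the Wold decomposition of \<open>V = V1 V2\<close>
  yields a BCL triple on \<open>ker V*\<close> with \<open>P = V2 V2*\<close> and \<open>U = V2 Q1 + V1*\<close>, and for this
  triple the reducibility of \<open>ran P\<close> under \<open>U\<close> gives back \<open>V2 (ker V1*) = ker V1*\<close>.\<close>

lemma scaleC_zero_right [simp]: "scaleC c (0::'a::complex_inner) = 0"
  by (metis add_cancel_right_right scaleC_add_right)

lemma scaleC_minus_one: "scaleC (-1) x = - (x::'a::complex_inner)"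
  by (metis scaleR_scaleC scaleR_minus1_left of_real_1 of_real_minus)

lemma scaleC_diff_right: "scaleC c (a - b) = scaleC c a - scaleC c (b::'a::complex_inner)"
proof -
  have "scaleC c (a - b) + scaleC c b = scaleC c a" by (metis scaleC_add_right diff_add_cancel)
  then show ?thesis by (simp add: algebra_simps)
qed

lemma scaleC_Re_Im: "scaleC c (x::'a::complex_inner) = Re c *\<^sub>R x + Im c *\<^sub>R scaleC \<i> x"
proof -
  have "c = complex_of_real (Re c) + complex_of_real (Im c) * \<i>"
    by (simp add: complex_eq_iff)
  then have "scaleC c x = scaleC (complex_of_real (Re c)) x + scaleC (complex_of_real (Im c)) (scaleC \<i> x)"
    by (metis scaleC_add_left scaleC_scaleC)
  then show ?thesis by (simp add: scaleR_scaleC)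
qed

lemma scaleC_ii_ii: "scaleC \<i> (scaleC \<i> x) = - (x::'a::complex_inner)"
  by (metis scaleC_scaleC scaleR_scaleC scaleR_minus1_left complex_i_mult_minus of_real_1 of_real_minus scaleC_one)

lemma inner_scaleC_ii_left: "inner (scaleC \<i> x) (y::'a::complex_inner) = - inner x (scaleC \<i> y)"
proof -
  have "inner (scaleC \<i> x) y = inner (scaleC \<i> (scaleC \<i> x)) (scaleC \<i> y)"
    by (simp add: inner_scaleC_ii)
  then show ?thesis by (simp add: scaleC_ii_ii)
qed

lemma inner_polarization:
  "inner x y = ((norm (x + y))\<^sup>2 - (norm x)\<^sup>2 - (norm (y::'a::real_inner))\<^sup>2) / 2"
  unfolding power2_norm_eq_inner by (simp add: inner_add_left inner_add_right inner_commute)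

lemma inner_eq_all_imp_eq:
  fixes x :: "'a::real_inner"
  assumes "\<And>w. inner x w = inner y w" shows "x = y"
proof -
  have "inner (x - y) (x - y) = 0" using assms[of "x - y"] by (simp add: inner_diff_left)
  then show ?thesis by simp
qed

lemma csubspace_0: "csubspace M \<Longrightarrow> 0 \<in> M"
  unfolding csubspace_def by blast

lemma csubspace_add: "csubspace M \<Longrightarrow> x \<in> M \<Longrightarrow> y \<in> M \<Longrightarrow> x + y \<in> M"
  unfolding csubspace_def by blast

lemma csubspace_scaleC: "csubspace M \<Longrightarrow> x \<in> M \<Longrightarrow> scaleC c x \<in> M"
  unfolding csubspace_def by blast

lemma csubspace_scaleR: "csubspace M \<Longrightarrow> x \<in> M \<Longrightarrow> r *\<^sub>R x \<in> M"
  by (simp add: scaleR_scaleC csubspace_scaleC)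

lemma csubspace_diff: "csubspace M \<Longrightarrow> x \<in> M \<Longrightarrow> y \<in> M \<Longrightarrow> x - y \<in> M"
  by (metis csubspace_add csubspace_scaleC[of M y "-1"] scaleC_minus_one diff_conv_add_uminus)

lemma csubspace_INT: "(\<And>n. csubspace (A n)) \<Longrightarrow> csubspace (\<Inter>n. A n)"
  unfolding csubspace_def by blast

lemma closed_csubspace_ocomp:
  assumes M: "csubspace M" shows "closed_csubspace (ocomp M)"
proof -
  have "ocomp M = (\<Inter>m\<in>M. {x. inner x m = 0})" unfolding ocomp_def by auto
  then have "closed (ocomp M)"
    by (auto intro!: closed_INT closed_Collect_eq continuous_intros)
  moreover have "scaleC c x \<in> ocomp M" if x: "x \<in> ocomp M" for c x
  proof -
    have "inner (scaleC \<i> x) m = 0" if "m \<in> M" for m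
      using x csubspace_scaleC[OF M that, of \<i>] unfolding ocomp_def by (simp add: inner_scaleC_ii_left)
    then show ?thesis using x unfolding ocomp_def by (simp add: scaleC_Re_Im[of c x] inner_add_left)
  qed
  ultimately show ?thesis
    unfolding closed_csubspace_def csubspace_def ocomp_def by (simp add: inner_add_left)
qed

lemma clinear_add: "clinear T \<Longrightarrow> T (x + y) = T x + T y"
  unfolding clinear_on_def by blast

lemma clinear_scaleC: "clinear T \<Longrightarrow> T (scaleC c x) = scaleC c (T x)"
  unfolding clinear_on_def by blast

lemma clinear_scaleR: "clinear T \<Longrightarrow> T (r *\<^sub>R x) = r *\<^sub>R T x"
  by (simp add: clinear_scaleC scaleR_scaleC)

lemma clinear_0: "clinear T \<Longrightarrow> T 0 = 0"
  by (metis add_cancel_right_right add_0 clinear_add)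

lemma clinear_diff: "clinear T \<Longrightarrow> T (x - y) = T x - T y"
proof -
  assume T: "clinear T"
  have "T (x - y) + T y = T x" by (metis T clinear_add diff_add_cancel)
  then show ?thesis by (simp add: algebra_simps)
qed

lemma clinear_comp: "clinear A \<Longrightarrow> clinear B \<Longrightarrow> clinear (A \<circ> B)"
  unfolding clinear_on_def by simp

lemma clinear_id: "clinear id"
  unfolding clinear_on_def by simp

lemma clinear_imp_clinear_on: "clinear T \<Longrightarrow> clinear_on M T"
  unfolding clinear_on_def by blast

lemma csubspace_range: "clinear T \<Longrightarrow> csubspace (range T)"
proof -
  assume T: "clinear T"
  have "T a + T b = T (a + b)" "scaleC c (T a) = T (scaleC c a)" for a b c
    by (simp_all add: clinear_add[OF T] clinear_scaleC[OF T])
  then show ?thesis unfolding csubspace_def using clinear_0[OF T] by (auto intro: range_eqI)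
qed

lemma csubspace_ker: "clinear T \<Longrightarrow> csubspace (ker_op T)"
  unfolding csubspace_def ker_op_def by (simp add: clinear_0 clinear_add clinear_scaleC)

section \<open>Orthogonal decomposition in a Hilbert space\<close>

lemma Cauchy_minimizing_sequence:
  fixes m :: "nat \<Rightarrow> 'a::real_inner"
  assumes midpoint: "\<And>p q. D \<le> (norm (x - (1/2) *\<^sub>R (m p + m q)))\<^sup>2"
    and approx: "\<And>n. (norm (x - m n))\<^sup>2 < D + inverse (real (Suc n))"
  shows "Cauchy m"
proof (rule metric_CauchyI)
  have parallelogram: "(dist (m p) (m q))\<^sup>2 = 2 * (norm (x - m p))\<^sup>2 + 2 * (norm (x - m q))\<^sup>2
      - 4 * (norm (x - (1/2) *\<^sub>R (m p + m q)))\<^sup>2" for p q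
    unfolding dist_norm power2_norm_eq_inner
    by (simp add: inner_diff_left inner_diff_right inner_add_left inner_add_right inner_commute algebra_simps)
  fix e :: real assume e: "0 < e"
  then have "0 < e\<^sup>2 / 4" by simp
  then obtain N where N: "inverse (real (Suc N)) < e\<^sup>2 / 4" using reals_Archimedean by blast
  show "\<exists>M. \<forall>p\<ge>M. \<forall>q\<ge>M. dist (m p) (m q) < e"
  proof (intro exI allI impI)
    fix p q assume "N \<le> p" "N \<le> q"
    then have "inverse (real (Suc p)) \<le> inverse (real (Suc N))"
      and "inverse (real (Suc q)) \<le> inverse (real (Suc N))"
      by (simp_all add: le_imp_inverse_le)
    then have "(dist (m p) (m q))\<^sup>2 < e\<^sup>2"
      using parallelogram[of p q] approx[of p] approx[of q] midpoint[of p q] N by linarith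
    then show "dist (m p) (m q) < e" using e power2_less_imp_less by fastforce
  qed
qed

lemma exists_nearest_point:
  fixes M :: "'a::{real_inner, complete_space} set"
  assumes closed: "closed M" and nonempty: "M \<noteq> {}"
    and midpoint: "\<And>y z. y \<in> M \<Longrightarrow> z \<in> M \<Longrightarrow> (1/2) *\<^sub>R (y + z) \<in> M"
  shows "\<exists>m\<in>M. \<forall>y\<in>M. norm (x - m) \<le> norm (x - y)"
proof -
  define D where "D = (INF y\<in>M. (norm (x - y))\<^sup>2)"
  have bdd: "bdd_below ((\<lambda>y. (norm (x - y))\<^sup>2) ` M)" by (rule bdd_belowI[of _ 0]) auto
  have D_le: "D \<le> (norm (x - y))\<^sup>2" if "y \<in> M" for y
    unfolding D_def using bdd that by (rule cINF_lower)
  have "\<exists>y\<in>M. (norm (x - y))\<^sup>2 < D + inverse (real (Suc n))" for n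
  proof -
    have "(INF y\<in>M. (norm (x - y))\<^sup>2) < D + inverse (real (Suc n))"
      unfolding D_def[symmetric] by simp
    then show ?thesis using cINF_less_iff[OF nonempty bdd] by blast
  qed
  then obtain m where m: "\<And>n. m n \<in> M" "\<And>n. (norm (x - m n))\<^sup>2 < D + inverse (real (Suc n))"
    by metis
  have "Cauchy m"
    by (rule Cauchy_minimizing_sequence[where D = D]) (use m midpoint D_le in auto)
  then obtain m0 where lim: "m \<longlonglongrightarrow> m0" using Cauchy_convergent_iff convergent_def by blast
  have "(norm (x - m0))\<^sup>2 \<le> D"
  proof (rule LIMSEQ_le)
    show "(\<lambda>n. (norm (x - m n))\<^sup>2) \<longlonglongrightarrow> (norm (x - m0))\<^sup>2" by (intro tendsto_intros lim)
    show "(\<lambda>n. D + inverse (real (Suc n))) \<longlonglongrightarrow> D"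
      using tendsto_add[OF tendsto_const LIMSEQ_inverse_real_of_nat, of D] by simp
  qed (use m in \<open>auto intro: less_imp_le\<close>)
  moreover have "m0 \<in> M" using closed_sequentially[OF closed _ lim] m by blast
  ultimately show ?thesis using D_le by (meson norm_ge_zero order_trans power2_le_imp_le)
qed

lemma nearest_point_orthogonal:
  fixes M :: "'a::real_inner set"
  assumes subspace: "\<And>y z r. y \<in> M \<Longrightarrow> z \<in> M \<Longrightarrow> y + r *\<^sub>R z \<in> M"
    and "m \<in> M" and nearest: "\<And>y. y \<in> M \<Longrightarrow> norm (x - m) \<le> norm (x - y)"
  shows "x - m \<in> ocomp M"
  unfolding ocomp_def
proof (intro CollectI ballI)
  fix y assume y: "y \<in> M"
  show "inner (x - m) y = 0"
  proof (cases "y = 0")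
    case False
    define a where "a = x - m"
    define t where "t = inner a y / (norm y)\<^sup>2"
    have "t\<^sup>2 * (norm y)\<^sup>2 = t * inner a y"
      using False by (simp add: t_def power2_eq_square)
    moreover have "(norm (a - t *\<^sub>R y))\<^sup>2 = (norm a)\<^sup>2 - 2 * t * inner a y + t\<^sup>2 * (norm y)\<^sup>2"
      unfolding power2_norm_eq_inner
      by (simp add: inner_diff_left inner_diff_right inner_commute power2_eq_square algebra_simps)
    moreover have "norm a \<le> norm (a - t *\<^sub>R y)"
      using nearest[OF subspace[OF \<open>m \<in> M\<close> y, of t]] by (simp add: a_def algebra_simps)
    ultimately have "t * inner a y \<le> 0"
      using power_mono[OF \<open>norm a \<le> norm (a - t *\<^sub>R y)\<close> norm_ge_zero, of 2] by linarith
    then have "(inner a y)\<^sup>2 / (norm y)\<^sup>2 \<le> 0" by (simp add: t_def power2_eq_square)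
    then show ?thesis using False by (simp add: a_def divide_le_0_iff)
  qed simp
qed

lemma orthogonal_decomposition:
  fixes M :: "'a::{complex_inner, complete_space} set"
  assumes "closed_csubspace M"
  shows "\<exists>m\<in>M. x - m \<in> ocomp M"
proof -
  have M: "csubspace M" "closed M" using assms unfolding closed_csubspace_def by auto
  have "M \<noteq> {}" using csubspace_0[OF M(1)] by blast
  moreover have "(1/2) *\<^sub>R (y + z) \<in> M" if "y \<in> M" "z \<in> M" for y z
    using that by (simp add: M(1) csubspace_add csubspace_scaleR)
  ultimately obtain m where "m \<in> M" "\<forall>y\<in>M. norm (x - m) \<le> norm (x - y)"
    using exists_nearest_point[OF M(2)] by blast
  moreover have "y + r *\<^sub>R z \<in> M" if "y \<in> M" "z \<in> M" for y z r
    using that by (simp add: M(1) csubspace_add csubspace_scaleR)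
  ultimately show ?thesis using nearest_point_orthogonal by blast
qed

lemma oproj_eqI:
  assumes M: "csubspace M" and "y \<in> M" and "x - y \<in> ocomp M"
  shows "oproj M x = y"
  unfolding oproj_def
proof (rule the_equality)
  show "y \<in> M \<and> x - y \<in> ocomp M" using assms by blast
  fix w assume w: "w \<in> M \<and> x - w \<in> ocomp M"
  have "w - y \<in> M" using w assms csubspace_diff by blast
  moreover have "(x - y) - (x - w) = w - y" by simp
  ultimately have "inner (w - y) (w - y) = 0"
    using w assms(3) unfolding ocomp_def by (force simp: inner_diff_left)
  then show "w = y" by simp
qed

section \<open>Isometries and their adjoints\<close>

lemma cisometry_comp: "cisometry A \<Longrightarrow> cisometry B \<Longrightarrow> cisometry (A \<circ> B)"
  unfolding cisometry_def using clinear_comp by auto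

lemma cisometry_id: "cisometry id"
  unfolding cisometry_def by (simp add: clinear_id)

lemma adj_on_eqI:
  assumes "z \<in> E" and "\<And>x. x \<in> E \<Longrightarrow> inner z x = inner y (T x)"
    and "\<And>a b. a \<in> E \<Longrightarrow> b \<in> E \<Longrightarrow> a - b \<in> E"
  shows "adj_on E T y = z"
  unfolding adj_on_def
proof (rule the_equality)
  show "z \<in> E \<and> (\<forall>x\<in>E. inner z x = inner y (T x))" using assms by blast
  fix w assume w: "w \<in> E \<and> (\<forall>x\<in>E. inner w x = inner y (T x))"
  then have "w - z \<in> E" using assms by blast
  then have "inner (w - z) (w - z) = 0" using w assms by (simp add: inner_diff_left)
  then show "w = z" by simp
qed

lemma adj_eqI: "(\<And>x. inner z x = inner y (T x)) \<Longrightarrow> adj T y = z"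
  by (rule adj_on_eqI) auto

locale hilbert_isometry =
  fixes V :: "'a::chilbert_space \<Rightarrow> 'a"
  assumes isometry: "cisometry V"
begin

lemma is_clinear: "clinear V"
  using isometry unfolding cisometry_def by blast

lemma norm_eq: "norm (V x) = norm x"
  using isometry unfolding cisometry_def by blast

lemma add: "V (x + y) = V x + V y"
  by (rule clinear_add[OF is_clinear])

lemma diff: "V (x - y) = V x - V y"
  by (rule clinear_diff[OF is_clinear])

lemma zero: "V 0 = 0"
  by (rule clinear_0[OF is_clinear])

lemma inner_eq: "inner (V x) (V y) = inner x y"
  using inner_polarization[of "V x" "V y"] inner_polarization[of x y] by (simp add: add[symmetric] norm_eq)

lemma is_bounded_linear: "bounded_linear V"
  by (rule bounded_linear_intro[where K = 1]) (simp_all add: add clinear_scaleR[OF is_clinear] norm_eq)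

lemma closed_range: "closed (range V)"
proof (rule closed_sequential_limits[THEN iffD2], intro allI impI, elim conjE)
  fix y l assume "\<forall>n. y n \<in> range V" and lim: "y \<longlonglongrightarrow> l"
  then have "\<forall>n. \<exists>w. y n = V w" by blast
  then obtain z where "\<And>n. y n = V (z n)" by metis
  then have z: "y = (\<lambda>n. V (z n))" by blast
  have "dist (z m) (z n) = dist (y m) (y n)" for m n
    by (simp add: z dist_norm diff[symmetric] norm_eq)
  then have "Cauchy z" using LIMSEQ_imp_Cauchy[OF lim] unfolding Cauchy_def by simp
  then obtain z0 where "z \<longlonglongrightarrow> z0" using Cauchy_convergent_iff convergent_def by blast
  then have "y \<longlonglongrightarrow> V z0" unfolding z by (rule bounded_linear.tendsto[OF is_bounded_linear])
  then show "l \<in> range V" using lim LIMSEQ_unique by blast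
qed

lemma closed_csubspace_range: "closed_csubspace (range V)"
  unfolding closed_csubspace_def using csubspace_range[OF is_clinear] closed_range by blast

lemma adj_inner: "inner (adj V y) x = inner y (V x)"
proof -
  obtain w where w: "y - V w \<in> ocomp (range V)"
    using orthogonal_decomposition[OF closed_csubspace_range] by blast
  have "inner w x = inner y (V x)" for x
    using w unfolding ocomp_def by (simp add: inner_diff_left inner_eq)
  then have "adj V y = w" by (rule adj_eqI)
  then show ?thesis using \<open>\<And>x. inner w x = inner y (V x)\<close> by simp
qed

lemma adj_cancel: "adj V (V x) = x"
  by (rule adj_eqI) (simp add: inner_eq)

lemma adj_add: "adj V (a + b) = adj V a + adj V b"
  by (rule adj_eqI) (simp add: inner_add_left adj_inner)

lemma adj_diff: "adj V (a - b) = adj V a - adj V b"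
  by (rule adj_eqI) (simp add: inner_diff_left adj_inner)

lemma adj_scaleR: "adj V (r *\<^sub>R a) = r *\<^sub>R adj V a"
  by (rule adj_eqI) (simp add: adj_inner)

lemma adj_zero: "adj V 0 = 0"
  by (rule adj_eqI) simp

lemma adj_scaleC: "adj V (scaleC c a) = scaleC c (adj V a)"
proof -
  have "adj V (scaleC \<i> a) = scaleC \<i> (adj V a)"
    by (rule adj_eqI) (simp add: inner_scaleC_ii_left adj_inner clinear_scaleC[OF is_clinear])
  then show ?thesis by (simp add: scaleC_Re_Im[of c] adj_add adj_scaleR)
qed

lemma adj_clinear: "clinear (adj V)"
  unfolding clinear_on_def by (simp add: adj_add adj_scaleC)

lemma norm_adj_le: "norm (adj V y) \<le> norm y"
proof -
  have "(norm (adj V y))\<^sup>2 = inner y (V (adj V y))"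
    by (simp add: power2_norm_eq_inner adj_inner)
  also have "\<dots> \<le> norm y * norm (adj V y)"
    using norm_cauchy_schwarz[of y "V (adj V y)"] by (simp add: norm_eq)
  finally show ?thesis by (cases "adj V y = 0") (auto simp: power2_eq_square mult_le_cancel_right)
qed

lemma adj_bounded_linear: "bounded_linear (adj V)"
  by (rule bounded_linear_intro[where K = 1]) (simp_all add: adj_add adj_scaleR norm_adj_le)

lemma adj_eq_0_iff: "adj V y = 0 \<longleftrightarrow> (\<forall>x. inner y (V x) = 0)"
proof
  assume "\<forall>x. inner y (V x) = 0"
  then have "inner (adj V y) (adj V y) = 0" by (simp add: adj_inner)
  then show "adj V y = 0" by simp
qed (metis adj_inner inner_zero_left)

lemma ker_adj: "ker_op (adj V) = ocomp (range V)"
  unfolding ker_op_def ocomp_def by (auto simp: adj_eq_0_iff)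

lemma orthogonal_range_if_adj_eq_0: "adj V y = 0 \<Longrightarrow> inner y (V x) = 0"
  by (simp add: adj_eq_0_iff)

lemma adj_minus_range_part: "adj V (y - V (adj V y)) = 0"
  by (simp add: adj_diff adj_cancel)

lemma norm_range_decomposition: "(norm y)\<^sup>2 = (norm (y - V (adj V y)))\<^sup>2 + (norm (adj V y))\<^sup>2"
proof -
  have "orthogonal (y - V (adj V y)) (V (adj V y))"
    unfolding orthogonal_def by (simp add: orthogonal_range_if_adj_eq_0 adj_minus_range_part)
  then have "(norm ((y - V (adj V y)) + V (adj V y)))\<^sup>2 = (norm (y - V (adj V y)))\<^sup>2 + (norm (V (adj V y)))\<^sup>2"
    by (rule norm_add_Pythagorean)
  then show ?thesis by (simp add: norm_eq)
qed

lemma oproj_ker_adj: "oproj (ker_op (adj V)) y = y - V (adj V y)"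
proof (rule oproj_eqI)
  show "csubspace (ker_op (adj V))" by (rule csubspace_ker[OF adj_clinear])
  show "y - V (adj V y) \<in> ker_op (adj V)" by (simp add: ker_op_def adj_minus_range_part)
  show "y - (y - V (adj V y)) \<in> ocomp (ker_op (adj V))"
    unfolding ocomp_def ker_op_def using orthogonal_range_if_adj_eq_0 by (simp add: inner_commute)
qed

end

lemma adj_comp:
  fixes A B :: "'a::chilbert_space \<Rightarrow> 'a"
  assumes "cisometry A" "cisometry B"
  shows "adj (A \<circ> B) y = adj B (adj A y)"
proof (rule adj_eqI)
  interpret A: hilbert_isometry A by (rule hilbert_isometry.intro) (fact assms(1))
  interpret B: hilbert_isometry B by (rule hilbert_isometry.intro) (fact assms(2))
  show "inner (adj B (adj A y)) x = inner y ((A \<circ> B) x)" for x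
    by (simp add: A.adj_inner B.adj_inner)
qed

lemma reducing_ocomp:
  fixes T :: "'a::chilbert_space \<Rightarrow> 'a"
  assumes T: "cisometry T" and M: "\<And>x. x \<in> M \<Longrightarrow> T x \<in> M" "\<And>x. x \<in> M \<Longrightarrow> adj T x \<in> M"
  shows "reducing (ocomp M) T"
proof -
  interpret T: hilbert_isometry T by (rule hilbert_isometry.intro) (fact T)
  have "inner (T x) m = 0" "inner (adj T x) m = 0" if "x \<in> ocomp M" "m \<in> M" for x m
  proof -
    have "inner x (adj T m) = 0" "inner x (T m) = 0"
      using that M unfolding ocomp_def by blast+
    then show "inner (T x) m = 0" "inner (adj T x) m = 0"
      by (metis T.adj_inner inner_commute)+
  qed
  then show ?thesis unfolding reducing_on_def ocomp_def by blast
qed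

section \<open>The Wold decomposition of an isometry\<close>

instance chilbert_space \<subseteq> banach ..

context hilbert_isometry
begin

definition unitary_part :: "'a set" where
  "unitary_part = (\<Inter>n. range (V ^^ n))"

definition shift_part :: "'a set" where
  "shift_part = ocomp unitary_part"

definition wandering_proj :: "'a \<Rightarrow> 'a" where
  "wandering_proj y = y - V (adj V y)"

text \<open>The Taylor coefficients of the unitary identification of the shift part with
  the Hardy space over the wandering subspace \<open>ker V*\<close>.\<close>
definition wold_coeff :: "'a \<Rightarrow> nat \<Rightarrow> 'a" where
  "wold_coeff x n = wandering_proj ((adj V ^^ n) x)"

lemma cisometry_funpow: "cisometry (V ^^ n)"
  by (induction n) (simp_all only: funpow.simps cisometry_id cisometry_comp isometry)

lemma inner_funpow_eq: "inner ((V ^^ n) x) ((V ^^ n) y) = inner x y"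
  by (rule hilbert_isometry.inner_eq, rule hilbert_isometry.intro, rule cisometry_funpow)

lemma adj_funpow_inner: "inner ((adj V ^^ n) y) x = inner y ((V ^^ n) x)"
proof (induction n arbitrary: y)
  case (Suc n)
  have "inner ((adj V ^^ Suc n) y) x = inner ((adj V ^^ n) (adj V y)) x"
    by (simp only: funpow_Suc_right comp_apply)
  also have "\<dots> = inner y (V ((V ^^ n) x))" by (simp only: Suc.IH adj_inner)
  finally show ?case by simp
qed simp

lemma adj_funpow_cancel: "(adj V ^^ n) ((V ^^ n) x) = x"
  by (rule inner_eq_all_imp_eq) (simp add: adj_funpow_inner inner_funpow_eq)

lemma adj_funpow_clinear: "clinear (adj V ^^ n)"
  by (induction n) (simp_all only: funpow.simps clinear_id clinear_comp adj_clinear)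

lemma adj_funpow_bounded_linear: "bounded_linear (\<lambda>y. (adj V ^^ n) y)"
proof (induction n)
  case (Suc n)
  show ?case by (simp only: funpow.simps comp_apply) (rule bounded_linear_compose[OF adj_bounded_linear Suc.IH])
qed simp

lemma mem_unitary_part_iff: "x \<in> unitary_part \<longleftrightarrow> (\<forall>n. \<exists>y. x = (V ^^ n) y)"
  unfolding unitary_part_def by blast

lemma closed_csubspace_unitary_part: "closed_csubspace unitary_part"
proof -
  have "closed_csubspace (range (V ^^ n))" for n
    by (rule hilbert_isometry.closed_csubspace_range, rule hilbert_isometry.intro, rule cisometry_funpow)
  then show ?thesis
    unfolding unitary_part_def closed_csubspace_def by (auto intro: csubspace_INT closed_INT)
qed

lemma closed_csubspace_shift_part: "closed_csubspace shift_part"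
  unfolding shift_part_def using closed_csubspace_ocomp closed_csubspace_unitary_part
  unfolding closed_csubspace_def by blast

lemma orth_sets_shift_unitary: "orth_sets shift_part unitary_part"
  unfolding orth_sets_def shift_part_def ocomp_def by blast

lemma ssum_shift_unitary: "ssum shift_part unitary_part = UNIV"
proof -
  have "x \<in> ssum shift_part unitary_part" for x
  proof -
    obtain m where "m \<in> unitary_part" "x - m \<in> shift_part"
      using orthogonal_decomposition[OF closed_csubspace_unitary_part] unfolding shift_part_def by blast
    then show ?thesis unfolding ssum_def by force
  qed
  then show ?thesis by blast
qed

lemma adj_unitary_part: "x \<in> unitary_part \<Longrightarrow> adj V x \<in> unitary_part"
proof -
  assume x: "x \<in> unitary_part"
  have "\<exists>y. adj V x = (V ^^ n) y" for n
  proof -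
    obtain y where "x = (V ^^ Suc n) y" using x unfolding mem_unitary_part_iff by blast
    then show ?thesis by (auto simp: adj_cancel)
  qed
  then show ?thesis unfolding mem_unitary_part_iff by blast
qed

lemma adj_funpow_unitary_part: "x \<in> unitary_part \<Longrightarrow> (adj V ^^ n) x \<in> unitary_part"
  by (induction n) (simp_all add: adj_unitary_part)

lemma adj_wandering_proj: "adj V (wandering_proj y) = 0"
  unfolding wandering_proj_def by (rule adj_minus_range_part)

lemma wandering_proj_add: "wandering_proj (a + b) = wandering_proj a + wandering_proj b"
  unfolding wandering_proj_def by (simp add: adj_add add)

lemma wandering_proj_diff: "wandering_proj (a - b) = wandering_proj a - wandering_proj b"
  unfolding wandering_proj_def by (simp add: adj_diff diff)

lemma wandering_proj_scaleC: "wandering_proj (scaleC c a) = scaleC c (wandering_proj a)"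
  unfolding wandering_proj_def
  by (simp add: adj_scaleC clinear_scaleC[OF is_clinear] scaleC_diff_right)

lemma wandering_proj_zero: "wandering_proj 0 = 0"
  unfolding wandering_proj_def by (simp add: adj_zero zero)

lemma wandering_proj_range: "wandering_proj (V u) = 0"
  unfolding wandering_proj_def by (simp add: adj_cancel)

lemma wandering_proj_ker_adj: "adj V a = 0 \<Longrightarrow> wandering_proj a = a"
  unfolding wandering_proj_def by (simp add: zero)

lemma wandering_proj_decomposition: "y = wandering_proj y + V (adj V y)"
  unfolding wandering_proj_def by simp

lemma wandering_proj_commuting:
  assumes T: "clinear T" and commute: "\<And>y. T (V y) = V (T y)"
  shows "wandering_proj (T y) = wandering_proj (T (wandering_proj y))"
proof -
  have "T y = T (wandering_proj y) + V (T (adj V y))"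
    by (subst wandering_proj_decomposition[of y]) (simp only: clinear_add[OF T] commute)
  then show ?thesis by (simp add: wandering_proj_add wandering_proj_range)
qed

lemma wandering_proj_bounded_linear: "bounded_linear wandering_proj"
proof -
  have "bounded_linear (\<lambda>y. y - V (adj V y))"
    by (intro bounded_linear_sub bounded_linear_ident
        bounded_linear_compose[OF is_bounded_linear adj_bounded_linear])
  then show ?thesis unfolding wandering_proj_def[abs_def] .
qed

lemma wold_coeff_add: "wold_coeff (x + y) n = wold_coeff x n + wold_coeff y n"
  unfolding wold_coeff_def by (simp add: clinear_add[OF adj_funpow_clinear] wandering_proj_add)

lemma wold_coeff_diff: "wold_coeff (x - y) n = wold_coeff x n - wold_coeff y n"
  unfolding wold_coeff_def by (simp add: clinear_diff[OF adj_funpow_clinear] wandering_proj_diff)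

lemma wold_coeff_scaleC: "wold_coeff (scaleC c x) n = scaleC c (wold_coeff x n)"
  unfolding wold_coeff_def by (simp add: clinear_scaleC[OF adj_funpow_clinear] wandering_proj_scaleC)

lemma adj_wold_coeff: "adj V (wold_coeff x n) = 0"
  unfolding wold_coeff_def by (rule adj_wandering_proj)

lemma wold_coeff_unitary_part: "h \<in> unitary_part \<Longrightarrow> wold_coeff h n = 0"
proof -
  assume "h \<in> unitary_part"
  then obtain y where "(adj V ^^ n) h = (V ^^ Suc 0) y"
    using adj_funpow_unitary_part unfolding mem_unitary_part_iff by blast
  then show ?thesis unfolding wold_coeff_def by (simp add: wandering_proj_range)
qed

lemma norm_adj_funpow_Suc:
  "(norm ((adj V ^^ n) x))\<^sup>2 = (norm (wold_coeff x n))\<^sup>2 + (norm ((adj V ^^ Suc n) x))\<^sup>2"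
  unfolding wold_coeff_def wandering_proj_def funpow.simps comp_apply
  by (rule norm_range_decomposition)

lemma sum_norm_wold_coeff:
  "(\<Sum>n<N. (norm (wold_coeff x n))\<^sup>2) = (norm x)\<^sup>2 - (norm ((adj V ^^ N) x))\<^sup>2"
  by (induction N) (simp_all add: norm_adj_funpow_Suc[of _ x])

lemma norm_funpow_eq: "norm ((V ^^ n) x) = norm x"
  by (rule hilbert_isometry.norm_eq, rule hilbert_isometry.intro, rule cisometry_funpow)

lemma inner_range_proj_funpow:
  assumes "N \<le> M"
  shows "inner ((V ^^ N) ((adj V ^^ N) x)) ((V ^^ M) ((adj V ^^ M) x)) = (norm ((adj V ^^ M) x))\<^sup>2"
proof -
  obtain d where M: "M = N + d" using le_Suc_ex[OF assms] by blast
  define a where "a = (adj V ^^ M) x"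
  have "a = (adj V ^^ (d + N)) x" unfolding a_def M by (simp add: add.commute)
  then have a: "a = (adj V ^^ d) ((adj V ^^ N) x)" by (simp add: funpow_add)
  have "(V ^^ M) a = (V ^^ N) ((V ^^ d) a)" unfolding M funpow_add by simp
  then have "inner ((V ^^ N) ((adj V ^^ N) x)) ((V ^^ M) a) = inner ((adj V ^^ N) x) ((V ^^ d) a)"
    by (simp add: inner_funpow_eq)
  also have "\<dots> = inner a a" by (simp only: adj_funpow_inner[symmetric] a[symmetric])
  finally show ?thesis unfolding a_def by (simp add: power2_norm_eq_inner)
qed

lemma Cauchy_range_proj_funpow: "Cauchy (\<lambda>N. (V ^^ N) ((adj V ^^ N) x))"
proof (rule metric_CauchyI)
  define a where "a N = (norm ((adj V ^^ N) x))\<^sup>2" for N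
  define z where "z N = (V ^^ N) ((adj V ^^ N) x)" for N
  have "decseq a" unfolding a_def by (rule decseq_SucI) (simp add: norm_adj_funpow_Suc[of _ x])
  then obtain L where "a \<longlonglongrightarrow> L" using decseq_convergent[of a 0] unfolding a_def by auto
  then have "Cauchy a" by (rule LIMSEQ_imp_Cauchy)
  have dist_z: "(dist (z N) (z M))\<^sup>2 = \<bar>a N - a M\<bar>" if "N \<le> M" for N M
  proof -
    have "(dist (z N) (z M))\<^sup>2 = (norm (z N))\<^sup>2 - 2 * inner (z N) (z M) + (norm (z M))\<^sup>2"
      by (simp add: dist_norm power2_norm_eq_inner inner_diff_left inner_diff_right inner_commute)
    moreover have "a M \<le> a N" using \<open>decseq a\<close> that by (simp add: decseq_def)
    ultimately show ?thesis
      using inner_range_proj_funpow[OF that, of x] unfolding z_def a_def by (simp add: norm_funpow_eq)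
  qed
  fix e :: real assume "0 < e"
  then have "0 < e\<^sup>2" by simp
  then obtain K where K: "\<And>N M. K \<le> N \<Longrightarrow> K \<le> M \<Longrightarrow> dist (a N) (a M) < e\<^sup>2"
    using \<open>Cauchy a\<close> unfolding Cauchy_def by blast
  have "dist (z N) (z M) < e" if "K \<le> N" "K \<le> M" for N M
  proof -
    have "(dist (z N) (z M))\<^sup>2 < e\<^sup>2"
      using dist_z[of N M] dist_z[of M N] K[OF that] K[OF that(2,1)]
      by (cases "N \<le> M") (simp_all add: dist_real_def dist_commute)
    then show ?thesis using \<open>0 < e\<close> power2_less_imp_less by fastforce
  qed
  then show "\<exists>K. \<forall>N\<ge>K. \<forall>M\<ge>K. dist ((V ^^ N) ((adj V ^^ N) x)) ((V ^^ M) ((adj V ^^ M) x)) < e"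
    unfolding z_def by blast
qed

lemma range_proj_funpow_limit:
  assumes lim: "(\<lambda>N. (V ^^ N) ((adj V ^^ N) x)) \<longlonglongrightarrow> l"
  shows "l \<in> unitary_part"
proof -
  have "l \<in> range (V ^^ n)" for n
  proof (rule closed_sequentially)
    show "closed (range (V ^^ n))"
      by (rule hilbert_isometry.closed_range, rule hilbert_isometry.intro, rule cisometry_funpow)
    show "(V ^^ (k + n)) ((adj V ^^ (k + n)) x) \<in> range (V ^^ n)" for k
      by (simp add: funpow_add add.commute[of _ n])
    show "(\<lambda>k. (V ^^ (k + n)) ((adj V ^^ (k + n)) x)) \<longlonglongrightarrow> l"
      using LIMSEQ_ignore_initial_segment[OF lim] .
  qed
  then show ?thesis unfolding unitary_part_def by blast
qed

lemma norm_adj_funpow_tendsto_0: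
  assumes "x \<in> shift_part"
  shows "(\<lambda>N. (norm ((adj V ^^ N) x))\<^sup>2) \<longlonglongrightarrow> 0"
proof -
  obtain l where l: "(\<lambda>N. (V ^^ N) ((adj V ^^ N) x)) \<longlonglongrightarrow> l"
    using Cauchy_range_proj_funpow Cauchy_convergent_iff convergent_def by blast
  have "(\<lambda>N. inner x ((V ^^ N) ((adj V ^^ N) x))) \<longlonglongrightarrow> inner x l"
    by (intro tendsto_intros l)
  moreover have "inner x l = 0"
    using range_proj_funpow_limit[OF l] assms unfolding shift_part_def ocomp_def by blast
  moreover have "inner x ((V ^^ N) ((adj V ^^ N) x)) = (norm ((adj V ^^ N) x))\<^sup>2" for N
    by (simp add: adj_funpow_inner[symmetric] power2_norm_eq_inner)
  ultimately show ?thesis by simp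
qed

lemma wold_coeff_sums: "x \<in> shift_part \<Longrightarrow> (\<lambda>n. (norm (wold_coeff x n))\<^sup>2) sums (norm x)\<^sup>2"
  unfolding sums_def sum_norm_wold_coeff
  using tendsto_diff[OF tendsto_const norm_adj_funpow_tendsto_0] by simp

lemma l2norm_wold_coeff: "x \<in> shift_part \<Longrightarrow> l2norm (wold_coeff x) = norm x"
  unfolding l2norm_def by (drule wold_coeff_sums) (simp add: sums_iff)

lemma wold_coeff_hardy2: "x \<in> shift_part \<Longrightarrow> wold_coeff x \<in> hardy2 (ker_op (adj V))"
  unfolding hardy2_def ker_op_def using adj_wold_coeff wold_coeff_sums sums_summable by blast

lemma inj_on_wold_coeff: "inj_on wold_coeff shift_part"
proof (rule inj_onI)
  fix x y assume "x \<in> shift_part" "y \<in> shift_part" and eq: "wold_coeff x = wold_coeff y"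
  then have "x - y \<in> shift_part"
    using closed_csubspace_shift_part csubspace_diff unfolding closed_csubspace_def by blast
  moreover have "wold_coeff (x - y) = (\<lambda>n. 0)" using eq by (simp add: wold_coeff_diff fun_eq_iff)
  ultimately have "(\<lambda>n. 0::real) sums (norm (x - y))\<^sup>2" using wold_coeff_sums by fastforce
  then have "(norm (x - y))\<^sup>2 = 0" using sums_unique2[OF _ sums_zero] by blast
  then show "x = y" by simp
qed

lemma inner_funpow_orthogonal:
  assumes "adj V b = 0" and "j < k"
  shows "inner ((V ^^ j) b) ((V ^^ k) a) = 0"
proof -
  obtain d where "k = j + Suc d" using less_imp_Suc_add[OF assms(2)] by auto
  then have "(V ^^ k) a = (V ^^ j) (V ((V ^^ d) a))" by (simp add: funpow_add funpow_swap1)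
  then show ?thesis by (simp add: inner_funpow_eq orthogonal_range_if_adj_eq_0[OF assms(1)])
qed

lemma norm_sum_funpow_ker_adj:
  assumes f: "\<And>k. adj V (f k) = 0"
  shows "(norm (\<Sum>k\<in>{m..<n}. (V ^^ k) (f k)))\<^sup>2 = (\<Sum>k\<in>{m..<n}. (norm (f k))\<^sup>2)"
proof (induction n)
  case (Suc n)
  show ?case
  proof (cases "m \<le> n")
    case True
    then have insert: "{m..<Suc n} = insert n {m..<n}" by auto
    let ?S = "\<Sum>k\<in>{m..<n}. (V ^^ k) (f k)"
    have "orthogonal ((V ^^ n) (f n)) ?S"
      unfolding orthogonal_def inner_sum_right
      by (rule sum.neutral) (simp add: inner_commute[of "(V ^^ n) (f n)"] inner_funpow_orthogonal f)
    then have "(norm ((V ^^ n) (f n) + ?S))\<^sup>2 = (norm ((V ^^ n) (f n)))\<^sup>2 + (norm ?S)\<^sup>2"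
      by (rule norm_add_Pythagorean)
    then show ?thesis unfolding insert by (simp add: Suc.IH norm_funpow_eq)
  qed simp
qed simp

lemma summable_funpow_ker_adj:
  assumes f: "\<And>k. adj V (f k) = 0" and summable: "summable (\<lambda>k. (norm (f k))\<^sup>2)"
  shows "summable (\<lambda>k. (V ^^ k) (f k))"
  unfolding summable_Cauchy
proof (intro allI impI)
  fix e :: real assume "0 < e"
  then have "0 < e\<^sup>2" by simp
  then obtain N where N: "\<And>m n. N \<le> m \<Longrightarrow> norm (\<Sum>k\<in>{m..<n}. (norm (f k))\<^sup>2) < e\<^sup>2"
    using summable unfolding summable_Cauchy by blast
  have "norm (\<Sum>k\<in>{m..<n}. (V ^^ k) (f k)) < e" if "N \<le> m" for m n
  proof -
    have "(norm (\<Sum>k\<in>{m..<n}. (V ^^ k) (f k)))\<^sup>2 < e\<^sup>2"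
      using N[OF that, of n] by (simp add: norm_sum_funpow_ker_adj[OF f] sum_nonneg)
    then show ?thesis using \<open>0 < e\<close> power2_less_imp_less by fastforce
  qed
  then show "\<exists>N. \<forall>m\<ge>N. \<forall>n. norm (\<Sum>k\<in>{m..<n}. (V ^^ k) (f k)) < e" by blast
qed

lemma wold_coeff_funpow_ker_adj:
  assumes "adj V a = 0"
  shows "wold_coeff ((V ^^ m) a) n = (if m = n then a else 0)"
proof (cases m n rule: linorder_cases)
  case less
  then obtain d where "n = Suc (m + d)" using less_imp_Suc_add by blast
  then have "n = Suc d + m" by simp
  then have "(adj V ^^ n) ((V ^^ m) a) = (adj V ^^ d) (adj V a)"
    by (simp add: funpow_add adj_funpow_cancel funpow_swap1)
  then show ?thesis
    using less assms clinear_0[OF adj_funpow_clinear] by (simp add: wold_coeff_def wandering_proj_zero)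
next
  case equal
  then show ?thesis by (simp add: wold_coeff_def adj_funpow_cancel wandering_proj_ker_adj assms)
next
  case greater
  then obtain d where "m = n + Suc d" using less_imp_Suc_add by auto
  then have "(adj V ^^ n) ((V ^^ m) a) = V ((V ^^ d) a)"
    by (simp add: funpow_add funpow_swap1 adj_funpow_cancel)
  then show ?thesis using greater by (simp add: wold_coeff_def wandering_proj_range)
qed

lemma wold_coeff_suminf:
  assumes f: "\<And>k. adj V (f k) = 0" and sums: "(\<lambda>k. (V ^^ k) (f k)) sums s"
  shows "wold_coeff s n = f n"
proof -
  have "bounded_linear (\<lambda>y. wold_coeff y n)"
    unfolding wold_coeff_def
    by (rule bounded_linear_compose[OF wandering_proj_bounded_linear adj_funpow_bounded_linear])
  then have "(\<lambda>k. wold_coeff ((V ^^ k) (f k)) n) sums wold_coeff s n"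
    by (rule bounded_linear.sums[OF _ sums])
  moreover have "(\<lambda>k. wold_coeff ((V ^^ k) (f k)) n) = (\<lambda>k. if k = n then f k else 0)"
    by (simp add: wold_coeff_funpow_ker_adj f)
  ultimately show ?thesis using sums_unique2[OF _ sums_single] by simp
qed

lemma wold_coeff_image: "wold_coeff ` shift_part = hardy2 (ker_op (adj V))"
proof
  show "hardy2 (ker_op (adj V)) \<subseteq> wold_coeff ` shift_part"
  proof
    fix f assume "f \<in> hardy2 (ker_op (adj V))"
    then have f: "\<And>k. adj V (f k) = 0" and "summable (\<lambda>k. (norm (f k))\<^sup>2)"
      unfolding hardy2_def ker_op_def by auto
    then obtain s where s: "(\<lambda>k. (V ^^ k) (f k)) sums s"
      using summable_funpow_ker_adj summable_sums by blast
    obtain sp su where "sp \<in> shift_part" "su \<in> unitary_part" "s = sp + su"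
      using ssum_shift_unitary unfolding ssum_def by blast
    moreover have "wold_coeff sp = f"
      using wold_coeff_suminf[OF f s] calculation by (auto simp: wold_coeff_add wold_coeff_unitary_part)
    ultimately show "f \<in> wold_coeff ` shift_part" by blast
  qed
qed (use wold_coeff_hardy2 in blast)

end

section \<open>Pairs of commuting isometries\<close>

lemma unitary_on_cong:
  assumes "csubspace M" and "\<And>x. x \<in> M \<Longrightarrow> S x = T x"
  shows "unitary_on M S \<longleftrightarrow> unitary_on M T"
proof -
  have "clinear_on M S \<longleftrightarrow> clinear_on M T"
    unfolding clinear_on_def using assms by (simp add: csubspace_add csubspace_scaleC)
  moreover have "S ` M = T ` M" using assms(2) by (rule image_cong[OF refl])
  ultimately show ?thesis unfolding unitary_on_def using assms(2) by simp
qed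

lemma eq_of_orthogonal_summands:
  fixes x :: "'a::real_inner"
  assumes "x = a + b + c" and "inner x a = 0" "inner x c = 0" "inner b a = 0" "inner b c = 0"
  shows "x = b"
proof -
  have "x - b = a + c" using assms(1) by simp
  then have "inner (x - b) (x - b) = inner (a + c) (x - b)"
    by (rule arg_cong[where f = "\<lambda>u. inner u (x - b)"])
  also have "\<dots> = inner a x + inner c x - inner a b - inner c b"
    by (simp add: inner_add_left inner_diff_right)
  also have "\<dots> = 0" using assms(2-) by (metis inner_commute diff_self add_0 diff_0_right)
  finally show ?thesis by simp
qed

locale commuting_isometries =
  fixes V1 V2 :: "'a::chilbert_space \<Rightarrow> 'a"
  assumes isometry1: "cisometry V1" and isometry2: "cisometry V2" and commute: "V1 \<circ> V2 = V2 \<circ> V1"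

sublocale commuting_isometries \<subseteq> V1: hilbert_isometry V1
  by (rule hilbert_isometry.intro) (fact isometry1)

sublocale commuting_isometries \<subseteq> V2: hilbert_isometry V2
  by (rule hilbert_isometry.intro) (fact isometry2)

sublocale commuting_isometries \<subseteq> V: hilbert_isometry "V1 \<circ> V2"
  by (rule hilbert_isometry.intro) (intro cisometry_comp isometry1 isometry2)

context commuting_isometries
begin

lemma swap: "commuting_isometries V2 V1"
  by unfold_locales (use isometry1 isometry2 commute in auto)

lemma commute_apply: "V1 (V2 x) = V2 (V1 x)"
  using commute by (metis comp_apply)

lemma adj_V: "adj (V1 \<circ> V2) y = adj V2 (adj V1 y)"
  by (rule adj_comp[OF isometry1 isometry2])

lemma adj_V': "adj (V1 \<circ> V2) y = adj V1 (adj V2 y)"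
  unfolding commute by (rule adj_comp[OF isometry2 isometry1])

lemma adj_commute: "adj V2 (adj V1 y) = adj V1 (adj V2 y)"
  using adj_V adj_V' by simp

lemma adj_ker_adj: "adj V1 k = 0 \<Longrightarrow> adj V1 (adj V2 k) = 0"
  by (simp add: adj_commute[symmetric] V2.adj_zero)

lemma csubspace_ker_adj1: "csubspace (ker_op (adj V1))"
  by (rule csubspace_ker[OF V1.adj_clinear])

lemma defect_op_swap: "defect_op V2 V1 = defect_op V1 V2"
  unfolding defect_op_def by (rule ext) (simp add: commute_apply adj_commute algebra_simps)

lemma defect_op_eq:
  "defect_op V1 V2 x = (x - V1 (adj V1 x)) - V2 (adj V2 x - V1 (adj V1 (adj V2 x)))"
  unfolding defect_op_def by (simp add: V2.diff commute_apply adj_commute algebra_simps)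

lemma image_ker_adj_if_defect_eq_0:
  assumes "defect_op V1 V2 = (\<lambda>_. 0)"
  shows "V2 ` ker_op (adj V1) = ker_op (adj V1)"
proof -
  have D: "x - V1 (adj V1 x) = V2 (adj V2 x - V1 (adj V1 (adj V2 x)))" for x
    using fun_cong[OF assms, of x] by (simp add: defect_op_eq)
  have "V2 k \<in> ker_op (adj V1)" if "adj V1 k = 0" for k
  proof -
    have "V2 k - V1 (adj V1 (V2 k)) = V2 k" using D[of "V2 k"] that by (simp add: V2.adj_cancel V1.zero)
    then show ?thesis using V1.adj_minus_range_part[of "V2 k"] by (simp add: ker_op_def)
  qed
  moreover have "k \<in> V2 ` ker_op (adj V1)" if "adj V1 k = 0" for k
  proof -
    have "k = V2 (adj V2 k - V1 (adj V1 (adj V2 k)))" using D[of k] that by (simp add: V1.zero)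
    then show ?thesis by (rule image_eqI) (simp add: ker_op_def V1.adj_minus_range_part)
  qed
  ultimately show ?thesis unfolding ker_op_def by blast
qed

lemma defect_eq_0_if_image_ker_adj:
  assumes image: "V2 ` ker_op (adj V1) = ker_op (adj V1)"
  shows "defect_op V1 V2 = (\<lambda>_. 0)"
proof
  fix x
  let ?b = "V2 (adj V2 x - V1 (adj V1 (adj V2 x)))"
  have "oproj (ker_op (adj V1)) x = ?b"
  proof (rule oproj_eqI[OF csubspace_ker_adj1])
    have "adj V2 x - V1 (adj V1 (adj V2 x)) \<in> ker_op (adj V1)"
      by (simp add: ker_op_def V1.adj_minus_range_part)
    then show "?b \<in> ker_op (adj V1)" by (subst image[symmetric]) (rule imageI)
    have "inner (x - ?b) (V2 w) = 0" if w: "adj V1 w = 0" for w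
    proof -
      have "inner ?b (V2 w) = inner (adj V2 x - V1 (adj V1 (adj V2 x))) w" by (rule V2.inner_eq)
      also have "\<dots> = inner (adj V2 x) w - inner w (V1 (adj V1 (adj V2 x)))"
        by (simp only: inner_diff_left inner_commute[of "V1 _" w])
      also have "\<dots> = inner x (V2 w)"
        by (simp only: V2.adj_inner V1.orthogonal_range_if_adj_eq_0[OF w] diff_zero)
      finally show ?thesis by (simp only: inner_diff_left diff_self)
    qed
    moreover have "m \<in> V2 ` ker_op (adj V1)" if "m \<in> ker_op (adj V1)" for m
      using that by (simp only: image)
    ultimately show "x - ?b \<in> ocomp (ker_op (adj V1))"
      unfolding ocomp_def ker_op_def by auto
  qed
  then show "defect_op V1 V2 x = 0" by (simp add: defect_op_eq V1.oproj_ker_adj)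
qed

lemma defect_eq_0_iff_image_ker_adj:
  "defect_op V1 V2 = (\<lambda>_. 0) \<longleftrightarrow> V2 ` ker_op (adj V1) = ker_op (adj V1)"
  using image_ker_adj_if_defect_eq_0 defect_eq_0_if_image_ker_adj by blast

lemma image_ker_adj_iff_reducing_unitary:
  "V2 ` ker_op (adj V1) = ker_op (adj V1) \<longleftrightarrow>
     reducing (ker_op (adj V1)) V2 \<and> unitary_on (ker_op (adj V1)) V2"
  unfolding reducing_on_def unitary_on_def ker_op_def
  using adj_ker_adj clinear_imp_clinear_on[OF V2.is_clinear] V2.norm_eq by auto

lemma fringe1_eq: "fringe1 V1 V2 k = V2 k - V1 (adj V1 (V2 k))"
  unfolding fringe1_def by (rule V1.oproj_ker_adj)

lemma image_ker_adj_iff_fringe1_unitary: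
  "V2 ` ker_op (adj V1) = ker_op (adj V1) \<longleftrightarrow> unitary_on (ker_op (adj V1)) (fringe1 V1 V2)"
proof -
  have fringe1_V2: "unitary_on (ker_op (adj V1)) (fringe1 V1 V2) \<longleftrightarrow> unitary_on (ker_op (adj V1)) V2"
    if "\<And>k. adj V1 k = 0 \<Longrightarrow> adj V1 (V2 k) = 0"
    by (rule unitary_on_cong[OF csubspace_ker_adj1]) (simp add: fringe1_eq that ker_op_def V1.zero)
  show ?thesis
  proof
    assume image: "V2 ` ker_op (adj V1) = ker_op (adj V1)"
    have "adj V1 (V2 k) = 0" if "adj V1 k = 0" for k
    proof -
      have "V2 k \<in> V2 ` ker_op (adj V1)" using that by (simp add: ker_op_def)
      then have "V2 k \<in> ker_op (adj V1)" by (simp only: image)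
      then show ?thesis by (simp add: ker_op_def)
    qed
    moreover have "unitary_on (ker_op (adj V1)) V2"
      using image unfolding image_ker_adj_iff_reducing_unitary by (rule conjunct2)
    ultimately show "unitary_on (ker_op (adj V1)) (fringe1 V1 V2)"
      using fringe1_V2 by blast
  next
    assume unitary: "unitary_on (ker_op (adj V1)) (fringe1 V1 V2)"
    have "adj V1 (V2 k) = 0" if "adj V1 k = 0" for k
    proof -
      have "norm (V2 k - V1 (adj V1 (V2 k))) = norm (V2 k)"
        using unitary that unfolding unitary_on_def ker_op_def by (simp add: fringe1_eq V2.norm_eq)
      then have "(norm (adj V1 (V2 k)))\<^sup>2 = 0" using V1.norm_range_decomposition[of "V2 k"] by simp
      then show ?thesis by simp
    qed
    then have "unitary_on (ker_op (adj V1)) V2" using fringe1_V2 unitary by blast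
    then show "V2 ` ker_op (adj V1) = ker_op (adj V1)" unfolding unitary_on_def by simp
  qed
qed

lemma orth_sets_ker_adj:
  assumes image: "V2 ` ker_op (adj V1) = ker_op (adj V1)"
  shows "orth_sets (ker_op (adj V1)) (ker_op (adj V2))"
  unfolding orth_sets_def
proof (intro ballI)
  fix a b assume "a \<in> ker_op (adj V1)" and b: "b \<in> ker_op (adj V2)"
  then have "a \<in> V2 ` ker_op (adj V1)" by (simp only: image)
  then obtain w where "a = V2 w" by blast
  then show "inner a b = 0"
    using b V2.orthogonal_range_if_adj_eq_0 by (simp add: ker_op_def inner_commute)
qed

lemma ssum_ker_adj:
  assumes image: "V1 ` ker_op (adj V2) = ker_op (adj V2)"
  shows "ssum (ker_op (adj V1)) (ker_op (adj V2)) = ker_op (adj (V1 \<circ> V2))"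
proof
  show "ssum (ker_op (adj V1)) (ker_op (adj V2)) \<subseteq> ker_op (adj (V1 \<circ> V2))"
  proof
    fix y assume "y \<in> ssum (ker_op (adj V1)) (ker_op (adj V2))"
    then obtain a b where "adj V1 a = 0" "adj V2 b = 0" "y = a + b"
      unfolding ssum_def ker_op_def by blast
    then show "y \<in> ker_op (adj (V1 \<circ> V2))"
      unfolding ker_op_def using adj_V[of a] adj_V'[of b]
      by (simp add: V.adj_add V1.adj_zero V2.adj_zero del: comp_apply)
  qed
  show "ker_op (adj (V1 \<circ> V2)) \<subseteq> ssum (ker_op (adj V1)) (ker_op (adj V2))"
  proof
    fix x assume "x \<in> ker_op (adj (V1 \<circ> V2))"
    then have "adj V1 x \<in> ker_op (adj V2)" by (simp add: ker_op_def adj_V del: comp_apply)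
    then have "V1 (adj V1 x) \<in> ker_op (adj V2)" by (subst image[symmetric]) (rule imageI)
    moreover have "x - V1 (adj V1 x) \<in> ker_op (adj V1)"
      by (simp add: ker_op_def V1.adj_minus_range_part)
    ultimately show "x \<in> ssum (ker_op (adj V1)) (ker_op (adj V2))"
      unfolding ssum_def by (intro CollectI exI[of _ "x - V1 (adj V1 x)"] exI[of _ "V1 (adj V1 x)"]) simp
  qed
qed

lemma image_ker_adj_if_orthogonal_sum:
  assumes orth: "orth_sets (ker_op (adj V1)) (ker_op (adj V2))"
    and sum: "ssum (ker_op (adj V1)) (ker_op (adj V2)) = ker_op (adj (V1 \<circ> V2))"
  shows "V2 ` ker_op (adj V1) = ker_op (adj V1)"
proof -
  have "V2 k \<in> ker_op (adj V1)" if "adj V1 k = 0" for k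
  proof -
    have "V2 k \<in> ker_op (adj (V1 \<circ> V2))"
      by (simp add: ker_op_def adj_V' V2.adj_cancel that del: comp_apply)
    then have "V2 k \<in> ssum (ker_op (adj V1)) (ker_op (adj V2))" by (simp only: sum)
    then obtain a b where ab: "a \<in> ker_op (adj V1)" "b \<in> ker_op (adj V2)" "V2 k = a + b"
      unfolding ssum_def by blast
    have "inner b b = inner (V2 k) b - inner a b" using ab(3) by (simp add: inner_add_left)
    also have "\<dots> = 0" using orth ab V2.orthogonal_range_if_adj_eq_0[of b k]
      unfolding orth_sets_def ker_op_def by (simp add: inner_commute)
    finally show ?thesis using ab by simp
  qed
  moreover have "k \<in> V2 ` ker_op (adj V1)" if k: "adj V1 k = 0" for k
  proof -
    define q where "q = k - V2 (adj V2 k)"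
    have q: "adj V2 q = 0" unfolding q_def by (rule V2.adj_minus_range_part)
    then have "inner k q = 0" using orth k unfolding orth_sets_def ker_op_def by blast
    moreover have "inner (V2 (adj V2 k)) q = 0"
      using V2.orthogonal_range_if_adj_eq_0[OF q] by (simp add: inner_commute)
    ultimately have "inner q q = 0" unfolding q_def by (simp add: inner_diff_left)
    then have "k = V2 (adj V2 k)" unfolding q_def by simp
    then show ?thesis using adj_ker_adj[OF k] unfolding ker_op_def by blast
  qed
  ultimately show ?thesis unfolding ker_op_def by blast
qed

lemma range_V1_ominus_range_V: "ominus_sp (range V1) (range (V1 \<circ> V2)) = V1 ` ker_op (adj V2)"
proof -
  have "V1 y \<in> ocomp (range (V1 \<circ> V2)) \<longleftrightarrow> adj V2 y = 0" for y
    unfolding ocomp_def V2.adj_eq_0_iff by (simp add: V1.inner_eq)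
  then show ?thesis unfolding ominus_sp_def ker_op_def by auto
qed

lemma orth_sets_ominus_sp: "orth_sets (ominus_sp X Y) Y"
  unfolding orth_sets_def ominus_sp_def ocomp_def by blast

lemma images_ker_adj_if_defect_eq_0:
  assumes "defect_op V1 V2 = (\<lambda>_. 0)"
  shows "V2 ` ker_op (adj V1) = ker_op (adj V1)" and "V1 ` ker_op (adj V2) = ker_op (adj V2)"
proof -
  interpret swapped: commuting_isometries V2 V1 by (rule swap)
  show "V2 ` ker_op (adj V1) = ker_op (adj V1)"
    by (rule iffD1[OF defect_eq_0_iff_image_ker_adj assms])
  have "defect_op V2 V1 = (\<lambda>_. 0)" using assms by (simp only: defect_op_swap)
  then show "V1 ` ker_op (adj V2) = ker_op (adj V2)"
    by (rule iffD1[OF swapped.defect_eq_0_iff_image_ker_adj])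
qed

lemma mem_ssum_ranges_if_defect_eq_0:
  assumes defect: "defect_op V1 V2 = (\<lambda>_. 0)"
  shows "x \<in> ssum (ssum (V1 ` ker_op (adj V2)) (V2 ` ker_op (adj V1))) (range (V1 \<circ> V2))"
proof -
  define c where "c = V1 (V2 (adj (V1 \<circ> V2) x))"
  define a where "a = V1 (adj V1 x - V2 (adj (V1 \<circ> V2) x))"
  define b where "b = V2 (adj V2 x - V1 (adj (V1 \<circ> V2) x))"
  have "a \<in> V1 ` ker_op (adj V2)" unfolding a_def ker_op_def
    by (intro imageI) (simp add: V2.adj_diff V2.adj_cancel adj_V del: comp_apply)
  moreover have "b \<in> V2 ` ker_op (adj V1)" unfolding b_def ker_op_def
    by (intro imageI) (simp add: V1.adj_diff V1.adj_cancel adj_V' del: comp_apply)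
  moreover have "c \<in> range (V1 \<circ> V2)" unfolding c_def by (metis comp_apply rangeI)
  moreover have "x = a + b + c"
  proof -
    have "x - V1 (adj V1 x) - V2 (adj V2 x) + c = 0"
      using fun_cong[OF defect, of x] unfolding defect_op_def c_def by (simp add: adj_V del: comp_apply)
    then show ?thesis
      unfolding a_def b_def c_def by (simp add: V1.diff V2.diff commute_apply algebra_simps)
  qed
  ultimately show ?thesis unfolding ssum_def by blast
qed

lemma range_decomposition_if_defect_eq_0:
  assumes defect: "defect_op V1 V2 = (\<lambda>_. 0)"
  shows "let A = ominus_sp (range V1) (range (V1 \<circ> V2));
             B = ominus_sp (range V2) (range (V1 \<circ> V2));
             C = range (V1 \<circ> V2)
         in orth_sets A B \<and> orth_sets A C \<and> orth_sets B C \<and> ssum (ssum A B) C = UNIV"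
proof -
  interpret swapped: commuting_isometries V2 V1 by (rule swap)
  note image = images_ker_adj_if_defect_eq_0[OF defect]
  have A: "ominus_sp (range V1) (range (V1 \<circ> V2)) = ker_op (adj V2)"
    using range_V1_ominus_range_V image(2) by simp
  have B: "ominus_sp (range V2) (range (V1 \<circ> V2)) = ker_op (adj V1)"
    using swapped.range_V1_ominus_range_V image(1) commute by simp
  have "x \<in> ssum (ssum (ker_op (adj V2)) (ker_op (adj V1))) (range (V1 \<circ> V2))" for x
    using mem_ssum_ranges_if_defect_eq_0[OF defect] unfolding image .
  then have sum: "ssum (ssum (ker_op (adj V2)) (ker_op (adj V1))) (range (V1 \<circ> V2)) = UNIV"
    by blast
  have AC: "orth_sets (ker_op (adj V2)) (range (V1 \<circ> V2))"
    using orth_sets_ominus_sp[of "range V1" "range (V1 \<circ> V2)"] unfolding A .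
  have BC: "orth_sets (ker_op (adj V1)) (range (V1 \<circ> V2))"
    using orth_sets_ominus_sp[of "range V2" "range (V1 \<circ> V2)"] unfolding B .
  have AB: "orth_sets (ker_op (adj V2)) (ker_op (adj V1))" by (rule swapped.orth_sets_ker_adj[OF image(2)])
  show ?thesis unfolding Let_def A B by (intro conjI AB AC BC sum)
qed

lemma adj1_eq_0_if_orthogonal:
  assumes "\<And>a. a \<in> V1 ` ker_op (adj V2) \<Longrightarrow> inner a m = 0"
    and "\<And>c. c \<in> range (V1 \<circ> V2) \<Longrightarrow> inner m c = 0"
  shows "adj V1 m = 0"
proof -
  have "inner m (V1 h) = 0" for h
  proof -
    define q where "q = h - V2 (adj V2 h)"
    have "V1 h = V1 q + V1 (V2 (adj V2 h))" unfolding q_def by (simp add: V1.diff)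
    moreover have "V1 q \<in> V1 ` ker_op (adj V2)"
      unfolding q_def ker_op_def by (simp add: V2.adj_minus_range_part)
    then have "inner (V1 q) m = 0" by (rule assms(1))
    then have "inner m (V1 q) = 0" by (simp only: inner_commute)
    moreover have "inner m (V1 (V2 (adj V2 h))) = 0"
      using assms(2)[OF rangeI[of "V1 \<circ> V2" "adj V2 h"]] by simp
    ultimately show ?thesis by (simp add: inner_add_right)
  qed
  then show ?thesis by (simp add: V1.adj_eq_0_iff)
qed

lemma image_ker_adj_if_range_decomposition:
  assumes "let A = ominus_sp (range V1) (range (V1 \<circ> V2));
               B = ominus_sp (range V2) (range (V1 \<circ> V2));
               C = range (V1 \<circ> V2)
           in orth_sets A B \<and> orth_sets A C \<and> orth_sets B C \<and> ssum (ssum A B) C = UNIV"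
  shows "V2 ` ker_op (adj V1) = ker_op (adj V1)"
proof -
  interpret swapped: commuting_isometries V2 V1 by (rule swap)
  define A where "A = ominus_sp (range V1) (range (V1 \<circ> V2))"
  define B where "B = ominus_sp (range V2) (range (V1 \<circ> V2))"
  have AB: "\<And>a b. a \<in> A \<Longrightarrow> b \<in> B \<Longrightarrow> inner a b = 0"
    and BC: "\<And>b c. b \<in> B \<Longrightarrow> c \<in> range (V1 \<circ> V2) \<Longrightarrow> inner b c = 0"
    and sum: "ssum (ssum A B) (range (V1 \<circ> V2)) = UNIV"
    using assms unfolding A_def B_def Let_def orth_sets_def by auto
  have A: "A = V1 ` ker_op (adj V2)" unfolding A_def by (rule range_V1_ominus_range_V)
  have B: "B = V2 ` ker_op (adj V1)" unfolding B_def using swapped.range_V1_ominus_range_V commute by simp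
  have "k \<in> B" if k: "adj V1 k = 0" for k
  proof -
    have "k \<in> ssum (ssum A B) (range (V1 \<circ> V2))" by (simp only: sum UNIV_I)
    then obtain a b c where abc: "a \<in> A" "b \<in> B" "c \<in> range (V1 \<circ> V2)" "k = a + b + c"
      unfolding ssum_def by blast
    have "k = b"
    proof (rule eq_of_orthogonal_summands[OF abc(4)])
      show "inner k a = 0" "inner k c = 0"
        using abc(1,3) A V1.orthogonal_range_if_adj_eq_0[OF k] by auto
      show "inner b a = 0" "inner b c = 0"
        using AB[OF abc(1,2)] BC[OF abc(2,3)] by (simp_all add: inner_commute)
    qed
    then show ?thesis using abc(2) by simp
  qed
  moreover have "adj V1 m = 0" if "m \<in> B" for m
    by (rule adj1_eq_0_if_orthogonal) (use AB BC that in \<open>auto simp: A\<close>)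
  ultimately show ?thesis using B unfolding ker_op_def by blast
qed

lemma defect_eq_0_iff_reducing_unitary1:
  "defect_op V1 V2 = (\<lambda>_. 0) \<longleftrightarrow> reducing (ker_op (adj V1)) V2 \<and> unitary_on (ker_op (adj V1)) V2"
  unfolding defect_eq_0_iff_image_ker_adj image_ker_adj_iff_reducing_unitary ..

lemma defect_eq_0_iff_reducing_unitary2:
  "defect_op V1 V2 = (\<lambda>_. 0) \<longleftrightarrow> reducing (ker_op (adj V2)) V1 \<and> unitary_on (ker_op (adj V2)) V1"
proof -
  interpret swapped: commuting_isometries V2 V1 by (rule swap)
  show ?thesis unfolding defect_op_swap[symmetric] by (rule swapped.defect_eq_0_iff_reducing_unitary1)
qed

lemma defect_eq_0_iff_fringes_unitary:
  "defect_op V1 V2 = (\<lambda>_. 0) \<longleftrightarrow>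
     unitary_on (ker_op (adj V1)) (fringe1 V1 V2) \<and> unitary_on (ker_op (adj V2)) (fringe2 V1 V2)"
proof -
  interpret swapped: commuting_isometries V2 V1 by (rule swap)
  have "fringe2 V1 V2 = fringe1 V2 V1" unfolding fringe1_def fringe2_def ..
  then have "defect_op V1 V2 = (\<lambda>_. 0) \<longleftrightarrow> unitary_on (ker_op (adj V2)) (fringe2 V1 V2)"
    unfolding defect_op_swap[symmetric] swapped.defect_eq_0_iff_image_ker_adj
      swapped.image_ker_adj_iff_fringe1_unitary by simp
  moreover have "defect_op V1 V2 = (\<lambda>_. 0) \<longleftrightarrow> unitary_on (ker_op (adj V1)) (fringe1 V1 V2)"
    unfolding defect_eq_0_iff_image_ker_adj image_ker_adj_iff_fringe1_unitary ..
  ultimately show ?thesis by meson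
qed

lemma defect_eq_0_iff_ker_adj_orthogonal_sum:
  "defect_op V1 V2 = (\<lambda>_. 0) \<longleftrightarrow>
     orth_sets (ker_op (adj V1)) (ker_op (adj V2))
     \<and> ssum (ker_op (adj V1)) (ker_op (adj V2)) = ker_op (adj (V1 \<circ> V2))"
proof
  assume "defect_op V1 V2 = (\<lambda>_. 0)"
  note image = images_ker_adj_if_defect_eq_0[OF this]
  show "orth_sets (ker_op (adj V1)) (ker_op (adj V2))
     \<and> ssum (ker_op (adj V1)) (ker_op (adj V2)) = ker_op (adj (V1 \<circ> V2))"
    by (intro conjI orth_sets_ker_adj[OF image(1)] ssum_ker_adj[OF image(2)])
qed (intro defect_eq_0_if_image_ker_adj image_ker_adj_if_orthogonal_sum; elim conjE)

lemma defect_eq_0_iff_range_decomposition: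
  "defect_op V1 V2 = (\<lambda>_. 0) \<longleftrightarrow>
     (let A = ominus_sp (range V1) (range (V1 \<circ> V2));
          B = ominus_sp (range V2) (range (V1 \<circ> V2));
          C = range (V1 \<circ> V2)
      in orth_sets A B \<and> orth_sets A C \<and> orth_sets B C \<and> ssum (ssum A B) C = UNIV)"
  using range_decomposition_if_defect_eq_0 defect_eq_0_if_image_ker_adj image_ker_adj_if_range_decomposition
  by blast

end

section \<open>Berger--Coburn--Lebow models\<close>

lemma sums_eq_sum_finite:
  fixes f :: "nat \<Rightarrow> 'a::{t2_space, comm_monoid_add}"
  assumes "f sums s" and "finite A" and "\<And>m. m \<notin> A \<Longrightarrow> f m = 0"
  shows "s = sum f A"
  using sums_unique2[OF assms(1) sums_finite[OF assms(2,3)]] .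

definition monomial :: "nat \<Rightarrow> 'a::zero \<Rightarrow> nat \<Rightarrow> 'a" where
  "monomial n e = (\<lambda>m. if m = n then e else 0)"

lemma monomial_hardy2:
  assumes "csubspace E" "e \<in> E" shows "monomial n e \<in> hardy2 E"
proof -
  have "(\<lambda>m. (norm (monomial n e m))\<^sup>2) = (\<lambda>m. if m = n then (norm e)\<^sup>2 else 0)"
    unfolding monomial_def by auto
  then show ?thesis
    using assms csubspace_0[OF assms(1)] unfolding hardy2_def by (simp add: monomial_def)
qed

context
  fixes E :: "'a::complex_inner set" and U :: "'a \<Rightarrow> 'a"
  assumes subspace: "csubspace E" and unitary: "unitary_on E U"
begin

lemma unitary_on_mem: "x \<in> E \<Longrightarrow> U x \<in> E"
  using unitary unfolding unitary_on_def by blast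

lemma unitary_on_add: "x \<in> E \<Longrightarrow> y \<in> E \<Longrightarrow> U (x + y) = U x + U y"
  using unitary unfolding unitary_on_def clinear_on_def by blast

lemma unitary_on_zero: "U 0 = 0"
  using unitary_on_add[of 0 0] csubspace_0[OF subspace] by simp

lemma unitary_on_inner:
  assumes x: "x \<in> E" and y: "y \<in> E" shows "inner (U x) (U y) = inner x y"
proof -
  have norm: "norm (U z) = norm z" if "z \<in> E" for z
    using unitary that unfolding unitary_on_def by blast
  have "inner (U x) (U y) = ((norm (U (x + y)))\<^sup>2 - (norm (U x))\<^sup>2 - (norm (U y))\<^sup>2) / 2"
    using inner_polarization[of "U x" "U y"] unitary_on_add[OF x y] by simp
  also have "\<dots> = inner x y"
    using inner_polarization[of x y] norm x y csubspace_add[OF subspace x y] by simp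
  finally show ?thesis .
qed

lemma adj_on_unitary_cancel: "x \<in> E \<Longrightarrow> adj_on E U (U x) = x"
  by (rule adj_on_eqI) (simp_all add: unitary_on_inner csubspace_diff[OF subspace])

lemma adj_on_unitary: "y \<in> E \<Longrightarrow> adj_on E U y \<in> E \<and> U (adj_on E U y) = y"
proof -
  assume "y \<in> E"
  then have "y \<in> U ` E" using unitary unfolding unitary_on_def by simp
  then obtain x where "x \<in> E" "y = U x" by blast
  then show ?thesis by (simp add: adj_on_unitary_cancel)
qed

lemma inner_adj_on_unitary: "x \<in> E \<Longrightarrow> y \<in> E \<Longrightarrow> inner x (adj_on E U y) = inner (U x) y"
  using unitary_on_inner[of x "adj_on E U y"] adj_on_unitary[of y] by simp

lemma adj_on_unitary_zero: "adj_on E U 0 = 0"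
  using adj_on_unitary_cancel[of 0] unitary_on_zero csubspace_0[OF subspace] by simp

end

context
  fixes E :: "'a::complex_inner set" and P :: "'a \<Rightarrow> 'a"
  assumes subspace: "csubspace E" and proj: "orth_proj_on E P"
begin

lemma orth_proj_on_mem: "x \<in> E \<Longrightarrow> P x \<in> E"
  using proj unfolding orth_proj_on_def by blast

lemma orth_proj_on_idem: "x \<in> E \<Longrightarrow> P (P x) = P x"
  using proj unfolding orth_proj_on_def by blast

lemma orth_proj_on_diff:
  assumes "x \<in> E" "y \<in> E" shows "P (x - y) = P x - P y"
proof -
  have "x - y \<in> E" using assms csubspace_diff[OF subspace] by blast
  then have "P ((x - y) + y) = P (x - y) + P y"
    using proj assms unfolding orth_proj_on_def clinear_on_def by blast
  then show ?thesis by (simp add: algebra_simps)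
qed

lemma orth_proj_on_zero: "P 0 = 0"
  using orth_proj_on_diff[of 0 0] csubspace_0[OF subspace] by simp

lemma orth_proj_on_orthogonal: "x \<in> E \<Longrightarrow> y \<in> E \<Longrightarrow> inner (P x) (y - P y) = 0"
  using proj orth_proj_on_mem unfolding orth_proj_on_def by (simp add: inner_diff_right)

lemma orth_proj_on_fixed:
  assumes "y \<in> E" "inner y (y - P y) = 0" shows "P y = y"
proof -
  have "inner (y - P y) (y - P y) = 0"
    using assms orth_proj_on_orthogonal[of y y] by (simp add: inner_diff_left)
  then show ?thesis by simp
qed

end

locale bcl_model = commuting_isometries V1 V2 for V1 V2 :: "'a::chilbert_space \<Rightarrow> 'a" +
  fixes E P U Hp Hu and W :: "'a \<Rightarrow> nat \<Rightarrow> 'a"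
  assumes closed_csubspace_E: "closed_csubspace E" and orth_proj: "orth_proj_on E P"
    and unitary: "unitary_on E U"
    and closed_csubspace_Hp: "closed_csubspace Hp" and closed_csubspace_Hu: "closed_csubspace Hu"
    and orth_Hp_Hu: "orth_sets Hp Hu" and ssum_Hp_Hu: "ssum Hp Hu = UNIV"
    and reducing_Hp1: "reducing Hp V1" and reducing_Hp2: "reducing Hp V2"
    and reducing_Hu1: "reducing Hu V1" and reducing_Hu2: "reducing Hu V2"
    and unitary_Hu1: "unitary_on Hu V1" and unitary_Hu2: "unitary_on Hu V2"
    and W_image: "W ` Hp = hardy2 E" and inj_W: "inj_on W Hp"
    and W_add: "\<forall>x\<in>Hp. \<forall>y\<in>Hp. W (x + y) = (\<lambda>n. W x n + W y n)"
    and W_scaleC: "\<forall>c. \<forall>x\<in>Hp. W (scaleC c x) = (\<lambda>n. scaleC c (W x n))"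
    and W_norm: "\<forall>x\<in>Hp. l2norm (W x) = norm x"
    and W_V1: "\<forall>x\<in>Hp. W (V1 x) = M_phi1 E P U (W x)"
    and W_V2: "\<forall>x\<in>Hp. W (V2 x) = M_phi2 E P U (W x)"

lemma is_BCL_triple_iff_bcl_model:
  assumes "commuting_isometries V1 V2"
  shows "is_BCL_triple V1 V2 E P U \<longleftrightarrow> (\<exists>Hp Hu W. bcl_model V1 V2 E P U Hp Hu W)"
  using assms unfolding is_BCL_triple_def bcl_model_def bcl_model_axioms_def
  by simp

context bcl_model
begin

lemma csubspace_E: "csubspace E"
  using closed_csubspace_E unfolding closed_csubspace_def by blast

lemma W_hardy2: "x \<in> Hp \<Longrightarrow> W x \<in> hardy2 E"
  using W_image by blast

lemma W_mem: "x \<in> Hp \<Longrightarrow> W x n \<in> E"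
  using W_hardy2 unfolding hardy2_def by blast

lemma W_norm_sums: "x \<in> Hp \<Longrightarrow> (\<lambda>n. (norm (W x n))\<^sup>2) sums (norm x)\<^sup>2"
proof -
  assume x: "x \<in> Hp"
  have summable: "summable (\<lambda>n. (norm (W x n))\<^sup>2)" using W_hardy2[OF x] unfolding hardy2_def by blast
  have "0 \<le> (\<Sum>n. (norm (W x n))\<^sup>2)" by (rule suminf_nonneg[OF summable]) simp
  moreover have "sqrt (\<Sum>n. (norm (W x n))\<^sup>2) = norm x" using W_norm x unfolding l2norm_def by blast
  ultimately have "(\<Sum>n. (norm (W x n))\<^sup>2) = (norm x)\<^sup>2" using real_sqrt_pow2 by fastforce
  then show ?thesis using summable sums_iff by blast
qed

lemma W_inner_sums: "x \<in> Hp \<Longrightarrow> y \<in> Hp \<Longrightarrow> (\<lambda>n. inner (W x n) (W y n)) sums inner x y"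
proof -
  assume x: "x \<in> Hp" and y: "y \<in> Hp"
  have "x + y \<in> Hp" using x y closed_csubspace_Hp csubspace_add unfolding closed_csubspace_def by blast
  then have "(\<lambda>n. ((norm (W (x + y) n))\<^sup>2 - (norm (W x n))\<^sup>2 - (norm (W y n))\<^sup>2) / 2) sums
        (((norm (x + y))\<^sup>2 - (norm x)\<^sup>2 - (norm y)\<^sup>2) / 2)"
    by (intro sums_divide sums_diff W_norm_sums x y)
  moreover have "W (x + y) = (\<lambda>n. W x n + W y n)" using W_add x y by blast
  ultimately show ?thesis by (simp add: inner_polarization[symmetric])
qed

lemma monomial_in_W_image: "e \<in> E \<Longrightarrow> \<exists>y\<in>Hp. W y = monomial n e"
proof -
  assume "e \<in> E"
  then have "monomial n e \<in> W ` Hp" using monomial_hardy2[OF csubspace_E] W_image by simp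
  then obtain y where "y \<in> Hp" "monomial n e = W y" by (rule imageE)
  then show ?thesis by auto
qed

lemma ker_adj1_subset_Hp: "adj V1 x = 0 \<Longrightarrow> x \<in> Hp"
proof -
  assume x: "adj V1 x = 0"
  obtain xp xu where xp: "xp \<in> Hp" and xu: "xu \<in> Hu" and "x = xp + xu"
    using ssum_Hp_Hu unfolding ssum_def by blast
  moreover obtain w where "xu = V1 w" using unitary_Hu1 xu unfolding unitary_on_def by blast
  then have "inner x xu = 0" using V1.orthogonal_range_if_adj_eq_0[OF x] by simp
  moreover have "inner xp xu = 0" using orth_Hp_Hu xp xu unfolding orth_sets_def by blast
  ultimately have "inner xu xu = 0" by (simp add: inner_add_left)
  then show "x \<in> Hp" using xp \<open>x = xp + xu\<close> by simp
qed

lemma M_phi1_monomial: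
  "M_phi1 E P U (monomial n e) m =
     (if m = n then adj_on E U (e - P e) else if m = Suc n then adj_on E U (P e) else 0)"
  unfolding M_phi1_def monomial_def
  by (cases m) (auto simp: orth_proj_on_zero[OF csubspace_E orth_proj] adj_on_unitary_zero[OF csubspace_E unitary])

lemma M_phi2_monomial_0:
  assumes "P (U e) = U e" shows "M_phi2 E P U (monomial 0 e) = monomial 0 (U e)"
proof
  fix m show "M_phi2 E P U (monomial 0 e) m = monomial 0 (U e) m"
    using assms unfolding M_phi2_def monomial_def
    by (cases m) (auto simp: orth_proj_on_zero[OF csubspace_E orth_proj] unitary_on_zero[OF csubspace_E unitary])
qed

lemmas U_mem = unitary_on_mem[OF csubspace_E unitary]
  and U_adj = adj_on_unitary[OF csubspace_E unitary]
  and U_adj_cancel = adj_on_unitary_cancel[OF csubspace_E unitary]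
  and inner_U_adj = inner_adj_on_unitary[OF csubspace_E unitary]
  and U_adj_zero = adj_on_unitary_zero[OF csubspace_E unitary]
  and P_mem = orth_proj_on_mem[OF csubspace_E orth_proj]
  and P_idem = orth_proj_on_idem[OF csubspace_E orth_proj]
  and P_diff = orth_proj_on_diff[OF csubspace_E orth_proj]
  and P_orthogonal = orth_proj_on_orthogonal[OF csubspace_E orth_proj]
  and P_fixed = orth_proj_on_fixed[OF csubspace_E orth_proj]

lemma coeff_orthogonality_ker_adj1:
  assumes x: "adj V1 x = 0" and e: "e \<in> E"
  shows "inner (U (W x n)) (e - P e) + inner (U (W x (Suc n))) (P e) = 0"
proof -
  have x_Hp: "x \<in> Hp" by (rule ker_adj1_subset_Hp[OF x])
  have "P e \<in> E" "e - P e \<in> E" using e P_mem csubspace_diff[OF csubspace_E] by auto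
  note inner_W_U_adj = inner_U_adj[OF W_mem[OF x_Hp] this(1)] inner_U_adj[OF W_mem[OF x_Hp] this(2)]
  obtain y where y: "y \<in> Hp" "W y = monomial n e" using monomial_in_W_image[OF e] by blast
  then have V1y: "V1 y \<in> Hp" "W (V1 y) = M_phi1 E P U (monomial n e)"
    using reducing_Hp1 W_V1 unfolding reducing_on_def by auto
  have "inner x (V1 y) = (\<Sum>m\<in>{n, Suc n}. inner (W x m) (W (V1 y) m))"
    by (rule sums_eq_sum_finite[OF W_inner_sums[OF x_Hp V1y(1)]]) (simp_all add: V1y M_phi1_monomial)
  moreover have "inner x (V1 y) = 0" by (rule V1.orthogonal_range_if_adj_eq_0[OF x])
  ultimately show ?thesis by (simp add: V1y M_phi1_monomial inner_W_U_adj)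
qed

lemma ker_adj1_imp_constant:
  assumes x: "adj V1 x = 0"
  shows "x \<in> Hp" and "W x = monomial 0 (W x 0)" and "P (U (W x 0)) = U (W x 0)"
proof -
  show x_Hp: "x \<in> Hp" by (rule ker_adj1_subset_Hp[OF x])
  note orth = coeff_orthogonality_ker_adj1[OF x]
  have range_P: "inner (U (W x n)) (e - P e) = 0" if "e \<in> E" for n e
    using orth[of "e - P e" n] that P_mem P_idem P_diff csubspace_diff[OF csubspace_E] by simp
  have ker_P: "inner (U (W x (Suc n))) (P e) = 0" if "e \<in> E" for n e
    using orth[of "P e" n] that P_mem P_idem by simp
  have "W x (Suc n) = 0" for n
  proof -
    let ?u = "U (W x (Suc n))"
    have u: "?u \<in> E" using U_mem W_mem x_Hp by blast
    then have "inner ?u ?u = inner ?u (?u - P ?u) + inner ?u (P ?u)" by (simp add: inner_diff_right)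
    also have "\<dots> = 0" using range_P[OF u, of "Suc n"] ker_P[OF u, of n] by simp
    finally have "?u = 0" by simp
    then show ?thesis using U_adj_cancel[OF W_mem[OF x_Hp]] U_adj_zero by metis
  qed
  then show "W x = monomial 0 (W x 0)"
    unfolding monomial_def by (intro ext) (case_tac m; simp)
  show "P (U (W x 0)) = U (W x 0)"
    using P_fixed U_mem W_mem[OF x_Hp] range_P by blast
qed

lemma constant_imp_ker_adj1:
  assumes g: "g \<in> E" and g_P: "P (U g) = U g"
  shows "\<exists>x\<in>Hp. adj V1 x = 0 \<and> W x = monomial 0 g"
proof -
  obtain x where x: "x \<in> Hp" "W x = monomial 0 g" using monomial_in_W_image[OF g] by blast
  have "inner x (V1 z) = 0" for z
  proof -
    obtain zp zu where z: "zp \<in> Hp" "zu \<in> Hu" "z = zp + zu"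
      using ssum_Hp_Hu unfolding ssum_def by blast
    have "V1 zu \<in> Hu" "V1 zp \<in> Hp" using reducing_Hu1 reducing_Hp1 z unfolding reducing_on_def by auto
    then have orth_Hu: "inner x (V1 zu) = 0" using orth_Hp_Hu x(1) unfolding orth_sets_def by blast
    have "inner x (V1 zp) = (\<Sum>m\<in>{0}. inner (W x m) (W (V1 zp) m))"
      by (rule sums_eq_sum_finite[OF W_inner_sums[OF x(1) \<open>V1 zp \<in> Hp\<close>]]) (simp_all add: x(2) monomial_def)
    also have "\<dots> = inner g (adj_on E U (W zp 0 - P (W zp 0)))"
      using W_V1 z(1) x(2) unfolding M_phi1_def monomial_def by simp
    also have "\<dots> = inner (U g) (W zp 0 - P (W zp 0))"
      using inner_U_adj[OF g] W_mem[OF z(1)] P_mem csubspace_diff[OF csubspace_E] by simp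
    also have "\<dots> = 0" using P_orthogonal[OF U_mem[OF g] W_mem[OF z(1)]] g_P by simp
    finally show ?thesis using orth_Hu z(3) by (simp add: V1.add inner_add_right)
  qed
  then show ?thesis using x V1.adj_eq_0_iff by blast
qed

lemma adj_U_range_P:
  assumes image: "V2 ` ker_op (adj V1) = ker_op (adj V1)" and p: "p \<in> P ` E"
  shows "adj_on E U p \<in> P ` E"
proof -
  have "P p = p" "p \<in> E" using p P_idem P_mem by auto
  then obtain x where x: "x \<in> Hp" "adj V1 x = 0" "W x = monomial 0 (adj_on E U p)"
    using constant_imp_ker_adj1 U_adj by metis
  then have "x \<in> V2 ` ker_op (adj V1)" using image by (simp add: ker_op_def)
  then obtain x' where x': "adj V1 x' = 0" "x = V2 x'" unfolding ker_op_def by blast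
  note x'_const = ker_adj1_imp_constant[OF x'(1)]
  have "monomial 0 (adj_on E U p) = monomial 0 (U (W x' 0))"
    using x(3) x'(2) x'_const W_V2 M_phi2_monomial_0 by metis
  then have "adj_on E U p = P (U (W x' 0))" using x'_const(3) unfolding monomial_def by metis
  then show ?thesis using U_mem W_mem x'_const(1) by blast
qed

lemma U_range_P:
  assumes image: "V2 ` ker_op (adj V1) = ker_op (adj V1)" and p: "p \<in> P ` E"
  shows "U p \<in> P ` E"
proof -
  have "P p = p" "p \<in> E" using p P_idem P_mem by auto
  then obtain x where x: "x \<in> Hp" "adj V1 x = 0" "W x = monomial 0 (adj_on E U p)"
    using constant_imp_ker_adj1 U_adj by metis
  then have "V2 x \<in> ker_op (adj V1)" by (subst image[symmetric]) (simp add: ker_op_def)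
  then have "adj V1 (V2 x) = 0" by (simp add: ker_op_def)
  moreover have "W (V2 x) = monomial 0 p"
    using x W_V2 M_phi2_monomial_0 U_adj \<open>P p = p\<close> \<open>p \<in> E\<close> by metis
  ultimately have "P (U p) = U p" using ker_adj1_imp_constant(3) unfolding monomial_def by metis
  then show ?thesis using U_mem \<open>p \<in> E\<close> by (metis imageI)
qed

lemma reducing_range_P_if_image_ker_adj:
  "V2 ` ker_op (adj V1) = ker_op (adj V1) \<Longrightarrow> reducing_on E (P ` E) U"
  unfolding reducing_on_def using adj_U_range_P U_range_P by blast

end

section \<open>The canonical BCL triple\<close>

lemma commute_funpow_apply:
  assumes "\<And>x. f (g x) = g (f x)" shows "f ((g ^^ n) x) = (g ^^ n) (f x)"
  by (induction n) (simp_all add: assms)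

context commuting_isometries
begin

lemma adj_V_V1: "adj (V1 \<circ> V2) (V1 y) = adj V2 y"
  by (simp only: adj_V V1.adj_cancel)

lemma adj_V_V2: "adj (V1 \<circ> V2) (V2 y) = adj V1 y"
  by (simp only: adj_V' V2.adj_cancel)

lemma adj_funpow_V_adj1: "(adj (V1 \<circ> V2) ^^ n) (adj V1 z) = adj V1 ((adj (V1 \<circ> V2) ^^ n) z)"
  by (rule commute_funpow_apply[symmetric]) (simp only: adj_V adj_V' adj_commute)

lemma adj_funpow_V_adj2: "(adj (V1 \<circ> V2) ^^ n) (adj V2 z) = adj V2 ((adj (V1 \<circ> V2) ^^ n) z)"
  by (rule commute_funpow_apply[symmetric]) (simp only: adj_V adj_V' adj_commute)

lemma adj2_V: "adj V2 (V1 (V2 w)) = V1 w"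
  by (simp only: commute_apply V2.adj_cancel)

lemma wandering_proj_V1: "V.wandering_proj (V1 y) = V.wandering_proj (V1 (V.wandering_proj y))"
  by (rule V.wandering_proj_commuting[OF V1.is_clinear]) (simp add: commute_apply)

lemma wandering_proj_V2: "V.wandering_proj (V2 y) = V.wandering_proj (V2 (V.wandering_proj y))"
  by (rule V.wandering_proj_commuting[OF V2.is_clinear]) (simp add: commute_apply)

lemma wandering_proj_adj1:
  "V.wandering_proj (adj V1 y) =
     V.wandering_proj (adj V1 (V.wandering_proj y)) + V.wandering_proj (V2 (V.wandering_proj (adj (V1 \<circ> V2) y)))"
proof -
  have "adj V1 y = adj V1 (V.wandering_proj y) + V2 (adj (V1 \<circ> V2) y)"
    by (subst V.wandering_proj_decomposition[of y]) (simp only: V1.adj_add comp_apply V1.adj_cancel)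
  then show ?thesis by (simp only: V.wandering_proj_add wandering_proj_V2[of "adj (V1 \<circ> V2) y"])
qed

lemma wandering_proj_adj2:
  "V.wandering_proj (adj V2 y) =
     V.wandering_proj (adj V2 (V.wandering_proj y)) + V.wandering_proj (V1 (V.wandering_proj (adj (V1 \<circ> V2) y)))"
proof -
  have "adj V2 y = adj V2 (V.wandering_proj y) + V1 (adj (V1 \<circ> V2) y)"
    by (subst V.wandering_proj_decomposition[of y]) (simp only: V2.adj_add comp_apply adj2_V)
  then show ?thesis by (simp only: V.wandering_proj_add wandering_proj_V1[of "adj (V1 \<circ> V2) y"])
qed

lemma wold_coeff_V1_0: "V.wold_coeff (V1 x) 0 = V.wandering_proj (V1 (V.wold_coeff x 0))"
  unfolding V.wold_coeff_def by (simp only: funpow_0 wandering_proj_V1[of x])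

lemma wold_coeff_V2_0: "V.wold_coeff (V2 x) 0 = V.wandering_proj (V2 (V.wold_coeff x 0))"
  unfolding V.wold_coeff_def by (simp only: funpow_0 wandering_proj_V2[of x])

lemma wold_coeff_V1_Suc:
  "V.wold_coeff (V1 x) (Suc n) =
     V.wandering_proj (adj V2 (V.wold_coeff x n)) + V.wandering_proj (V1 (V.wold_coeff x (Suc n)))"
proof -
  have "(adj (V1 \<circ> V2) ^^ Suc n) (V1 x) = adj V2 ((adj (V1 \<circ> V2) ^^ n) x)"
    by (simp only: funpow_Suc_right comp_apply adj_V_V1 adj_funpow_V_adj2)
  then show ?thesis
    unfolding V.wold_coeff_def by (simp only: wandering_proj_adj2[of "(adj (V1 \<circ> V2) ^^ n) x"] funpow.simps(2) comp_apply)
qed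

lemma wold_coeff_V2_Suc:
  "V.wold_coeff (V2 x) (Suc n) =
     V.wandering_proj (adj V1 (V.wold_coeff x n)) + V.wandering_proj (V2 (V.wold_coeff x (Suc n)))"
proof -
  have "(adj (V1 \<circ> V2) ^^ Suc n) (V2 x) = adj V1 ((adj (V1 \<circ> V2) ^^ n) x)"
    by (simp only: funpow_Suc_right comp_apply adj_V_V2 adj_funpow_V_adj1)
  then show ?thesis
    unfolding V.wold_coeff_def by (simp only: wandering_proj_adj1[of "(adj (V1 \<circ> V2) ^^ n) x"] funpow.simps(2) comp_apply)
qed

lemma V1_funpow_V: "V1 (((V1 \<circ> V2) ^^ n) x) = ((V1 \<circ> V2) ^^ n) (V1 x)"
  by (rule commute_funpow_apply) (simp add: commute_apply)

lemma V2_funpow_V: "V2 (((V1 \<circ> V2) ^^ n) x) = ((V1 \<circ> V2) ^^ n) (V2 x)"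
  by (rule commute_funpow_apply) (simp add: commute_apply)

lemma unitary_part_V1: "x \<in> V.unitary_part \<Longrightarrow> V1 x \<in> V.unitary_part"
  unfolding V.mem_unitary_part_iff by (metis V1_funpow_V)

lemma unitary_part_V2: "x \<in> V.unitary_part \<Longrightarrow> V2 x \<in> V.unitary_part"
  unfolding V.mem_unitary_part_iff by (metis V2_funpow_V)

lemma unitary_part_adj1: "x \<in> V.unitary_part \<Longrightarrow> adj V1 x \<in> V.unitary_part \<and> x = V1 (adj V1 x)"
proof -
  assume x: "x \<in> V.unitary_part"
  have "\<exists>y. adj V1 x = ((V1 \<circ> V2) ^^ n) y \<and> x = V1 (adj V1 x)" for n
  proof -
    obtain y where "x = ((V1 \<circ> V2) ^^ Suc n) y" using x unfolding V.mem_unitary_part_iff by blast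
    then have "x = V1 (V2 (((V1 \<circ> V2) ^^ n) y))" by simp
    then show ?thesis by (metis V1.adj_cancel V2_funpow_V)
  qed
  then show ?thesis unfolding V.mem_unitary_part_iff by blast
qed

lemma unitary_part_adj2: "x \<in> V.unitary_part \<Longrightarrow> adj V2 x \<in> V.unitary_part \<and> x = V2 (adj V2 x)"
proof -
  assume x: "x \<in> V.unitary_part"
  have "\<exists>y. adj V2 x = ((V1 \<circ> V2) ^^ n) y \<and> x = V2 (adj V2 x)" for n
  proof -
    obtain y where "x = ((V1 \<circ> V2) ^^ Suc n) y" using x unfolding V.mem_unitary_part_iff by blast
    then have "x = V2 (V1 (((V1 \<circ> V2) ^^ n) y))" by (simp add: commute_apply)
    then show ?thesis by (metis V2.adj_cancel V1_funpow_V)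
  qed
  then show ?thesis unfolding V.mem_unitary_part_iff by blast
qed

lemma unitary_on_unitary_part1: "unitary_on V.unitary_part V1"
  unfolding unitary_on_def
  using clinear_imp_clinear_on[OF V1.is_clinear] V1.norm_eq unitary_part_V1 unitary_part_adj1
  by (metis (no_types, lifting) image_subset_iff subsetI subset_antisym image_eqI)

lemma unitary_on_unitary_part2: "unitary_on V.unitary_part V2"
  unfolding unitary_on_def
  using clinear_imp_clinear_on[OF V2.is_clinear] V2.norm_eq unitary_part_V2 unitary_part_adj2
  by (metis (no_types, lifting) image_subset_iff subsetI subset_antisym image_eqI)

lemma reducing_unitary_part1: "reducing V.unitary_part V1"
  unfolding reducing_on_def using unitary_part_V1 unitary_part_adj1 by blast

lemma reducing_unitary_part2: "reducing V.unitary_part V2"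
  unfolding reducing_on_def using unitary_part_V2 unitary_part_adj2 by blast

lemma reducing_shift_part1: "reducing V.shift_part V1"
  unfolding V.shift_part_def using isometry1 unitary_part_V1 unitary_part_adj1 by (blast intro: reducing_ocomp)

lemma reducing_shift_part2: "reducing V.shift_part V2"
  unfolding V.shift_part_def using isometry2 unitary_part_V2 unitary_part_adj2 by (blast intro: reducing_ocomp)

text \<open>The BCL triple of the pair, realised on the wandering subspace \<open>ker V*\<close> of \<open>V = V1 V2\<close>.\<close>

definition canonical_proj :: "'a \<Rightarrow> 'a" where
  "canonical_proj e = V2 (adj V2 e)"

definition canonical_unitary :: "'a \<Rightarrow> 'a" where
  "canonical_unitary e = V2 (e - V1 (adj V1 e)) + adj V1 e"

lemma closed_csubspace_ker_adj_V: "closed_csubspace (ker_op (adj (V1 \<circ> V2)))"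
  unfolding V.ker_adj by (rule closed_csubspace_ocomp[OF csubspace_range[OF V.is_clinear]])

lemma csubspace_ker_adj_V: "csubspace (ker_op (adj (V1 \<circ> V2)))"
  using closed_csubspace_ker_adj_V unfolding closed_csubspace_def by blast

lemma orth_proj_on_canonical_proj: "orth_proj_on (ker_op (adj (V1 \<circ> V2))) canonical_proj"
  unfolding orth_proj_on_def
proof (intro conjI ballI)
  show "canonical_proj x \<in> ker_op (adj (V1 \<circ> V2))" if "x \<in> ker_op (adj (V1 \<circ> V2))" for x
    using that unfolding canonical_proj_def ker_op_def by (simp only: mem_Collect_eq adj_V' V2.adj_cancel)
  show "clinear_on (ker_op (adj (V1 \<circ> V2))) canonical_proj"
    by (rule clinear_imp_clinear_on)
      (simp add: clinear_on_def canonical_proj_def V2.add V2.adj_add V2.adj_scaleC clinear_scaleC[OF V2.is_clinear])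
  show "canonical_proj (canonical_proj x) = canonical_proj x" for x
    unfolding canonical_proj_def by (simp only: V2.adj_cancel)
  show "inner (canonical_proj x) y = inner x (canonical_proj y)" for x y
    unfolding canonical_proj_def by (metis V2.adj_inner inner_commute)
qed

lemma canonical_unitary_ker_adj_V:
  assumes "adj (V1 \<circ> V2) e = 0" shows "adj (V1 \<circ> V2) (canonical_unitary e) = 0"
proof -
  have "adj (V1 \<circ> V2) (V2 (e - V1 (adj V1 e))) = 0" by (simp only: adj_V_V2 V1.adj_minus_range_part)
  moreover have "adj (V1 \<circ> V2) (adj V1 e) = 0"
    using assms by (simp only: adj_V adj_commute V1.adj_zero)
  ultimately show ?thesis unfolding canonical_unitary_def by (simp only: V.adj_add add_0)
qed

lemma norm_canonical_unitary:
  assumes "adj (V1 \<circ> V2) e = 0" shows "norm (canonical_unitary e) = norm e"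
proof -
  have "adj V2 (adj V1 e) = 0" using assms by (simp only: adj_V)
  then have "inner (adj V1 e) (V2 (e - V1 (adj V1 e))) = 0" by (rule V2.orthogonal_range_if_adj_eq_0)
  then have "inner (V2 (e - V1 (adj V1 e))) (adj V1 e) = 0" by (simp only: inner_commute)
  then have "(norm (canonical_unitary e))\<^sup>2 = (norm (V2 (e - V1 (adj V1 e))))\<^sup>2 + (norm (adj V1 e))\<^sup>2"
    unfolding canonical_unitary_def by (intro norm_add_Pythagorean) (simp add: orthogonal_def)
  also have "\<dots> = (norm e)\<^sup>2" by (simp add: V2.norm_eq V1.norm_range_decomposition[of e])
  finally show ?thesis by simp
qed

lemma canonical_unitary_surj:
  assumes y: "adj (V1 \<circ> V2) y = 0"
  shows "\<exists>x. adj (V1 \<circ> V2) x = 0 \<and> canonical_unitary x = y"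
proof -
  define q where "q = y - V2 (adj V2 y)"
  define x where "x = adj V2 y + V1 q"
  have q: "adj V2 q = 0" unfolding q_def by (rule V2.adj_minus_range_part)
  have adj1_x: "adj V1 x = q"
    using y unfolding x_def by (simp add: V1.adj_add V1.adj_cancel adj_V' del: comp_apply)
  have "canonical_unitary x = V2 (x - V1 q) + q" unfolding canonical_unitary_def adj1_x ..
  also have "\<dots> = y" unfolding x_def q_def by simp
  finally have "canonical_unitary x = y" .
  moreover have "adj (V1 \<circ> V2) (adj V2 y) = 0"
    using y[unfolded adj_V'] by (simp only: adj_V[of "adj V2 y"] V2.adj_zero)
  then have "adj (V1 \<circ> V2) x = 0" unfolding x_def by (simp only: V.adj_add adj_V_V1 q add_0)
  ultimately show ?thesis by blast
qed

lemma unitary_on_canonical_unitary: "unitary_on (ker_op (adj (V1 \<circ> V2))) canonical_unitary"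
  unfolding unitary_on_def
proof (intro conjI ballI)
  show "clinear_on (ker_op (adj (V1 \<circ> V2))) canonical_unitary"
    by (rule clinear_imp_clinear_on)
      (simp add: clinear_on_def canonical_unitary_def V1.add V2.add V1.diff V2.diff V1.adj_add V1.adj_scaleC
        clinear_scaleC[OF V1.is_clinear] clinear_scaleC[OF V2.is_clinear] scaleC_add_right scaleC_diff_right
        algebra_simps)
  show "canonical_unitary ` ker_op (adj (V1 \<circ> V2)) = ker_op (adj (V1 \<circ> V2))"
    using canonical_unitary_ker_adj_V canonical_unitary_surj unfolding ker_op_def by blast
  show "norm (canonical_unitary x) = norm x" if "x \<in> ker_op (adj (V1 \<circ> V2))" for x
    using that norm_canonical_unitary unfolding ker_op_def by blast
qed

lemma canonical_unitary_wandering_V1: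
  "canonical_unitary (V.wandering_proj (V1 a)) = a - canonical_proj a"
proof -
  have "V.wandering_proj (V1 a) = V1 (a - V2 (adj V2 a))"
    unfolding V.wandering_proj_def by (simp add: adj_V_V1 V1.diff)
  then show ?thesis
    unfolding canonical_unitary_def canonical_proj_def by (simp add: V1.adj_cancel V2.zero)
qed

lemma wandering_proj_adj2_ker:
  assumes "adj (V1 \<circ> V2) a = 0" shows "V.wandering_proj (adj V2 a) = adj V2 a"
proof (rule V.wandering_proj_ker_adj)
  have "adj V1 (adj V2 a) = 0" using assms by (simp only: adj_V')
  then show "adj (V1 \<circ> V2) (adj V2 a) = 0" by (simp only: adj_V V2.adj_zero)
qed

lemma canonical_unitary_adj2:
  "adj (V1 \<circ> V2) a = 0 \<Longrightarrow> canonical_unitary (adj V2 a) = canonical_proj a"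
  unfolding canonical_unitary_def canonical_proj_def by (simp add: adj_V' V1.zero del: comp_apply)

lemma canonical_proj_unitary:
  "adj (V1 \<circ> V2) a = 0 \<Longrightarrow> canonical_proj (canonical_unitary a) = V2 (a - V1 (adj V1 a))"
  unfolding canonical_proj_def canonical_unitary_def by (simp add: V2.adj_add V2.adj_cancel adj_V del: comp_apply)

lemma wandering_proj_V2_ker:
  "adj (V1 \<circ> V2) a = 0 \<Longrightarrow> V.wandering_proj (V2 a) = canonical_proj (canonical_unitary a)"
  unfolding V.wandering_proj_def by (simp add: canonical_proj_unitary adj_V_V2 V2.diff commute_apply)

lemma wandering_proj_adj1_ker:
  assumes "adj (V1 \<circ> V2) a = 0"
  shows "V.wandering_proj (adj V1 a) = canonical_unitary a - canonical_proj (canonical_unitary a)"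
proof -
  have "adj (V1 \<circ> V2) (adj V1 a) = 0" using assms by (simp only: adj_V adj_commute V1.adj_zero)
  then have "V.wandering_proj (adj V1 a) = adj V1 a" by (rule V.wandering_proj_ker_adj)
  also have "\<dots> = canonical_unitary a - canonical_proj (canonical_unitary a)"
    by (simp only: canonical_proj_unitary[OF assms]) (simp add: canonical_unitary_def)
  finally show ?thesis .
qed

lemma wold_coeff_V2:
  "V.wold_coeff (V2 x) = M_phi2 (ker_op (adj (V1 \<circ> V2))) canonical_proj canonical_unitary (V.wold_coeff x)"
proof
  fix n
  note ker = V.adj_wold_coeff[of x]
  show "V.wold_coeff (V2 x) n = M_phi2 (ker_op (adj (V1 \<circ> V2))) canonical_proj canonical_unitary (V.wold_coeff x) n"
    by (cases n) (simp_all add: M_phi2_def wold_coeff_V2_0 wold_coeff_V2_Suc wandering_proj_V2_ker[OF ker]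
        wandering_proj_adj1_ker[OF ker])
qed

lemma wold_coeff_V1:
  "V.wold_coeff (V1 x) = M_phi1 (ker_op (adj (V1 \<circ> V2))) canonical_proj canonical_unitary (V.wold_coeff x)"
proof
  fix n
  let ?K = "ker_op (adj (V1 \<circ> V2))"
  note ker = V.adj_wold_coeff[of x]
  have unitary: "canonical_unitary (V.wold_coeff (V1 x) n) =
      (V.wold_coeff x n - canonical_proj (V.wold_coeff x n))
      + (case n of 0 \<Rightarrow> 0 | Suc m \<Rightarrow> canonical_proj (V.wold_coeff x m))"
  proof (cases n)
    case (Suc m)
    have "V.wandering_proj (adj V2 (V.wold_coeff x m)) \<in> ?K"
      "V.wandering_proj (V1 (V.wold_coeff x (Suc m))) \<in> ?K"
      by (simp_all add: ker_op_def V.adj_wandering_proj)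
    then show ?thesis
      using Suc unitary_on_add[OF csubspace_ker_adj_V unitary_on_canonical_unitary]
      by (simp add: wold_coeff_V1_Suc canonical_unitary_wandering_V1 wandering_proj_adj2_ker[OF ker]
          canonical_unitary_adj2[OF ker])
  qed (simp add: wold_coeff_V1_0 canonical_unitary_wandering_V1)
  have "V.wold_coeff (V1 x) n \<in> ?K" by (simp add: ker_op_def V.adj_wold_coeff)
  from adj_on_unitary_cancel[OF csubspace_ker_adj_V unitary_on_canonical_unitary this]
  show "V.wold_coeff (V1 x) n = M_phi1 ?K canonical_proj canonical_unitary (V.wold_coeff x) n"
    unfolding M_phi1_def unitary by simp
qed

lemma bcl_model_canonical:
  "bcl_model V1 V2 (ker_op (adj (V1 \<circ> V2))) canonical_proj canonical_unitary
     V.shift_part V.unitary_part V.wold_coeff"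
proof (intro bcl_model.intro bcl_model_axioms.intro)
  show "\<forall>x\<in>V.shift_part. \<forall>y\<in>V.shift_part. V.wold_coeff (x + y) = (\<lambda>n. V.wold_coeff x n + V.wold_coeff y n)"
    by (intro ballI ext) (rule V.wold_coeff_add)
  show "\<forall>c. \<forall>x\<in>V.shift_part. V.wold_coeff (scaleC c x) = (\<lambda>n. scaleC c (V.wold_coeff x n))"
    by (intro allI ballI ext) (rule V.wold_coeff_scaleC)
  show "\<forall>x\<in>V.shift_part. l2norm (V.wold_coeff x) = norm x"
    by (intro ballI) (rule V.l2norm_wold_coeff)
  show "\<forall>x\<in>V.shift_part. V.wold_coeff (V1 x) = M_phi1 (ker_op (adj (V1 \<circ> V2))) canonical_proj
      canonical_unitary (V.wold_coeff x)"
    by (intro ballI) (rule wold_coeff_V1)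
  show "\<forall>x\<in>V.shift_part. V.wold_coeff (V2 x) = M_phi2 (ker_op (adj (V1 \<circ> V2))) canonical_proj
      canonical_unitary (V.wold_coeff x)"
    by (intro ballI) (rule wold_coeff_V2)
qed (rule commuting_isometries_axioms closed_csubspace_ker_adj_V orth_proj_on_canonical_proj
    unitary_on_canonical_unitary V.closed_csubspace_shift_part V.closed_csubspace_unitary_part
    V.orth_sets_shift_unitary V.ssum_shift_unitary reducing_shift_part1 reducing_shift_part2
    reducing_unitary_part1 reducing_unitary_part2 unitary_on_unitary_part1 unitary_on_unitary_part2
    V.wold_coeff_image V.inj_on_wold_coeff)+

lemma range_canonical_proj_iff:
  "p \<in> canonical_proj ` ker_op (adj (V1 \<circ> V2)) \<longleftrightarrow> adj (V1 \<circ> V2) p = 0 \<and> canonical_proj p = p"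
proof
  assume "p \<in> canonical_proj ` ker_op (adj (V1 \<circ> V2))"
  then obtain e where e: "adj (V1 \<circ> V2) e = 0" and p: "p = canonical_proj e"
    unfolding ker_op_def by blast
  have "adj (V1 \<circ> V2) p = 0"
    unfolding p canonical_proj_def adj_V_V2 using e by (simp only: adj_V')
  moreover have "canonical_proj p = p" unfolding p canonical_proj_def by (simp only: V2.adj_cancel)
  ultimately show "adj (V1 \<circ> V2) p = 0 \<and> canonical_proj p = p" ..
next
  assume "adj (V1 \<circ> V2) p = 0 \<and> canonical_proj p = p"
  then show "p \<in> canonical_proj ` ker_op (adj (V1 \<circ> V2))"
    by (intro image_eqI[where x = p]) (simp_all add: ker_op_def)
qed

lemma image_ker_adj_if_canonical_reducing:
  assumes reducing: "reducing_on (ker_op (adj (V1 \<circ> V2))) (canonical_proj ` ker_op (adj (V1 \<circ> V2)))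
    canonical_unitary"
  shows "V2 ` ker_op (adj V1) = ker_op (adj V1)"
proof -
  have V2_range: "V2 k \<in> canonical_proj ` ker_op (adj (V1 \<circ> V2))" if k: "adj V1 k = 0" for k
    unfolding range_canonical_proj_iff canonical_proj_def by (simp only: adj_V_V2 k V2.adj_cancel simp_thms)
  have "k \<in> V2 ` ker_op (adj V1)" if k: "adj V1 k = 0" for k
  proof -
    have "k \<in> ker_op (adj (V1 \<circ> V2))" using k by (simp add: ker_op_def adj_V V2.adj_zero del: comp_apply)
    moreover have "canonical_unitary k = V2 k" unfolding canonical_unitary_def by (simp add: k V1.zero)
    ultimately have "adj_on (ker_op (adj (V1 \<circ> V2))) canonical_unitary (V2 k) = k"
      using adj_on_unitary_cancel[OF csubspace_ker_adj_V unitary_on_canonical_unitary] by metis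
    moreover have "adj_on (ker_op (adj (V1 \<circ> V2))) canonical_unitary (V2 k)
        \<in> canonical_proj ` ker_op (adj (V1 \<circ> V2))"
      using reducing V2_range[OF k] unfolding reducing_on_def by blast
    ultimately have "V2 (adj V2 k) = k" unfolding range_canonical_proj_iff canonical_proj_def by simp
    moreover have "adj V2 k \<in> ker_op (adj V1)" using adj_ker_adj[OF k] by (simp add: ker_op_def)
    ultimately show ?thesis by (metis imageI)
  qed
  moreover have "adj V1 (V2 k) = 0" if k: "adj V1 k = 0" for k
  proof -
    have "canonical_unitary (V2 k) \<in> canonical_proj ` ker_op (adj (V1 \<circ> V2))"
      using reducing V2_range[OF k] unfolding reducing_on_def by blast
    then have "canonical_proj (canonical_unitary (V2 k)) = canonical_unitary (V2 k)"
      unfolding range_canonical_proj_iff by blast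
    then show ?thesis using canonical_proj_unitary[of "V2 k"] k
      by (simp add: canonical_unitary_def adj_V_V2 del: comp_apply)
  qed
  ultimately show ?thesis unfolding ker_op_def by blast
qed

lemma defect_eq_0_iff_BCL_reducing:
  "defect_op V1 V2 = (\<lambda>_. 0) \<longleftrightarrow> (\<forall>E P U. is_BCL_triple V1 V2 E P U \<longrightarrow> reducing_on E (P ` E) U)"
proof
  assume "defect_op V1 V2 = (\<lambda>_. 0)"
  note image = images_ker_adj_if_defect_eq_0(1)[OF this]
  show "\<forall>E P U. is_BCL_triple V1 V2 E P U \<longrightarrow> reducing_on E (P ` E) U"
  proof (intro allI impI)
    fix E P U assume "is_BCL_triple V1 V2 E P U"
    then obtain Hp Hu W where "bcl_model V1 V2 E P U Hp Hu W"
      using is_BCL_triple_iff_bcl_model[OF commuting_isometries_axioms] by blast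
    then show "reducing_on E (P ` E) U" using image by (rule bcl_model.reducing_range_P_if_image_ker_adj)
  qed
next
  assume "\<forall>E P U. is_BCL_triple V1 V2 E P U \<longrightarrow> reducing_on E (P ` E) U"
  moreover have "is_BCL_triple V1 V2 (ker_op (adj (V1 \<circ> V2))) canonical_proj canonical_unitary"
    using is_BCL_triple_iff_bcl_model[OF commuting_isometries_axioms] bcl_model_canonical by blast
  ultimately have "reducing_on (ker_op (adj (V1 \<circ> V2))) (canonical_proj ` ker_op (adj (V1 \<circ> V2)))
      canonical_unitary" by blast
  then show "defect_op V1 V2 = (\<lambda>_. 0)"
    by (intro defect_eq_0_if_image_ker_adj image_ker_adj_if_canonical_reducing)
qed

end

theorem lemma2p3:
  fixes V1 V2 :: "'a::chilbert_space \<Rightarrow> 'a"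
  assumes "cisometry V1" and "cisometry V2" and "V1 \<circ> V2 = V2 \<circ> V1"
  shows
   "(defect_op V1 V2 = (\<lambda>_. 0)
       \<longleftrightarrow> reducing (ker_op (adj V2)) V1 \<and> unitary_on (ker_op (adj V2)) V1)
  \<and> (defect_op V1 V2 = (\<lambda>_. 0)
       \<longleftrightarrow> reducing (ker_op (adj V1)) V2 \<and> unitary_on (ker_op (adj V1)) V2)
  \<and> (defect_op V1 V2 = (\<lambda>_. 0)
       \<longleftrightarrow> unitary_on (ker_op (adj V1)) (fringe1 V1 V2)
           \<and> unitary_on (ker_op (adj V2)) (fringe2 V1 V2))
  \<and> (defect_op V1 V2 = (\<lambda>_. 0)
       \<longleftrightarrow> orth_sets (ker_op (adj V1)) (ker_op (adj V2))
           \<and> ssum (ker_op (adj V1)) (ker_op (adj V2)) = ker_op (adj (V1 \<circ> V2)))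
  \<and> (defect_op V1 V2 = (\<lambda>_. 0)
       \<longleftrightarrow> (let A = ominus_sp (range V1) (range (V1 \<circ> V2));
                B = ominus_sp (range V2) (range (V1 \<circ> V2));
                C = range (V1 \<circ> V2)
            in orth_sets A B \<and> orth_sets A C \<and> orth_sets B C \<and> ssum (ssum A B) C = UNIV))
  \<and> (defect_op V1 V2 = (\<lambda>_. 0)
       \<longleftrightarrow> (\<forall>E P U. is_BCL_triple V1 V2 E P U \<longrightarrow> reducing_on E (P ` E) U))"
proof -
  interpret commuting_isometries V1 V2 using assms by unfold_locales
  show ?thesis
    by (intro conjI defect_eq_0_iff_reducing_unitary2 defect_eq_0_iff_reducing_unitary1
        defect_eq_0_iff_fringes_unitary defect_eq_0_iff_ker_adj_orthogonal_sum
        defect_eq_0_iff_range_decomposition defect_eq_0_iff_BCL_reducing)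
qed

end
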